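(* There exists exactly one Markov transition kernel $\mu$ on $[0,\infty)$ with $\mu(0,\{0\})=1$ and $\mu(t,[0,t))=1$ for every $t>0$ (absorbing state $0$ and strictly decreasing paths) such that, for every $t>0$, the chain $(X_n)_{n\ge0}$ with $X_0=t$ satisfies $$P\big(\#\{n\ge1: X_n\in(0,t)\}=j\big)=q_j(t)\qquad\text{for all } j\ge0.$$
   Context: $\sigma_1(k,j)$ are the unsigned Stirling numbers of the first kind ($\sigma_1(k,j)=0$ for $k<j$, $\sigma_1(0,0)=1$); $p_j(t)=e^{-t}\sum_{k=j}^\infty \frac{t^k}{k!}\frac{\sigma_1(k,j)}{k!}$; and $q_j(t)=\frac1t\int_0^t p_j(u)\,du$ for $t>0$, equivalently $q_j(t)=e^{-t}\sum_{k=0}^\infty\frac{t^k}{(k+1)!}\sum_{i=0}^k\frac{\sigma_1(i,j)}{i!}$ (a probability distribution in $j\ge0$). *)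

theory Defs
  imports "HOL-Probability.Probability" "HOL-Combinatorics.Stirling"
begin

definition p_fun :: "nat \<Rightarrow> real \<Rightarrow> real" where
  "p_fun j t = exp (- t) * (\<Sum>k. t ^ k / fact k * (real (stirling k j) / fact k))"

definition q_fun :: "nat \<Rightarrow> real \<Rightarrow> real" where
  "q_fun j t = (1 / t) * integral {0..t} (p_fun j)"

definition S :: "real measure" where
  "S = restrict_space borel {0..}"

definition markov_kernel :: "(real \<Rightarrow> real measure) \<Rightarrow> bool" where
  "markov_kernel \<mu> \<longleftrightarrow> \<mu> \<in> S \<rightarrow>\<^sub>M prob_algebra S"

primrec fdd :: "(real \<Rightarrow> real measure) \<Rightarrow> real \<Rightarrow> nat \<Rightarrow> (nat \<Rightarrow> real) measure" where
  "fdd \<mu> t 0 = return (\<Pi>\<^sub>M i\<in>{..0}. S) (\<lambda>i\<in>{..0}. t)"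
| "fdd \<mu> t (Suc n) = fdd \<mu> t n \<bind>
     (\<lambda>x. distr (\<mu> (x n)) (\<Pi>\<^sub>M i\<in>{..Suc n}. S)
                 (\<lambda>y. \<lambda>i\<in>{..Suc n}. if i = Suc n then y else x i))"

definition chain_law :: "(real \<Rightarrow> real measure) \<Rightarrow> real \<Rightarrow> real stream measure \<Rightarrow> bool" where
  "chain_law \<mu> t P \<longleftrightarrow> prob_space P \<and> sets P = sets (stream_space S) \<and>
     (\<forall>n. distr P (\<Pi>\<^sub>M i\<in>{..n}. S) (\<lambda>\<omega>. \<lambda>i\<in>{..n}. \<omega> !! i) = fdd \<mu> t n)"

definition visits_eq :: "real \<Rightarrow> nat \<Rightarrow> real stream set" where
  "visits_eq t j = {\<omega> \<in> streams {0..}.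
      finite {n. n \<ge> 1 \<and> \<omega> !! n \<in> {0<..<t}} \<and> card {n. n \<ge> 1 \<and> \<omega> !! n \<in> {0<..<t}} = j}"

end

theory Submission
  imports Defs
begin

text \<open>
  The kernel is \<open>x \<mapsto>\<close> law of \<open>max 0 (x U - E)\<close>, with \<open>U\<close> uniform on \<open>[0, 1]\<close> and \<open>E\<close> an
  independent standard exponential variable. For any kernel \<open>K\<close> with absorbing state \<open>0\<close> and
  strictly decreasing paths, a path from \<open>t > 0\<close> visits \<open>(0, t)\<close> exactly \<open>j\<close> times iff
  \<open>X\<^sub>j > 0 = X\<^sub>j\<^sub>+\<^sub>1\<close>. So the visit law is \<open>h\<^sub>j(t)\<close>, where \<open>h\<^sub>0(t) = K(t, {0})\<close> and \<open>h\<^sub>j\<^sub>+\<^sub>1(t)\<close> is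
  the integral of \<open>h\<^sub>j\<close> over \<open>(0, t)\<close> against \<open>K(t, \<cdot>)\<close>. For the kernel above, averaging over \<open>U\<close>
  turns an integral against \<open>K(t, \<cdot>)\<close> into \<open>1/t\<close> times an integral over \<open>[0, t]\<close>, as in the
  definition of \<open>q\<^sub>j\<close>; what remains is the convolution identity \<open>p\<^sub>j\<^sub>+\<^sub>1 = exp (- \<cdot>) * q\<^sub>j\<close>, which
  comes from the recurrence of the Stirling numbers. Hence \<open>h\<^sub>j = q\<^sub>j\<close>.

  Conversely, if \<open>h\<^sub>j = q\<^sub>j\<close> for all \<open>j\<close>, then \<open>K(t, \<cdot>)\<close> and the kernel above put the same mass
  on \<open>0\<close> and give the same integral over \<open>(0, t)\<close> to every \<open>q\<^sub>j\<close>. Since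
  \<open>q\<^sub>j(x) = \<Sum>\<^sub>k \<sigma>\<^sub>1(k, j)/k! \<cdot> G\<^sub>k(x)/x\<close>, with \<open>G\<^sub>k\<close> the distribution function of the Gamma law of
  shape \<open>k + 1\<close>, these integrals are the Stirling transform of the integrals of \<open>G\<^sub>k(x)/x\<close>,
  which is inverted by evaluating generating functions at negative integers. The integrals of
  \<open>G\<^sub>k(x)/x\<close> determine all moments of the law on \<open>[0, t)\<close>, hence its characteristic function.
\<close>

section \<open>The power series behind \<open>p_fun\<close> and \<open>q_fun\<close>\<close>

lemma stirling_le_fact: "stirling k j \<le> fact k"
proof (cases "j \<le> k")
  case True
  have "stirling k j \<le> (\<Sum>i\<le>k. stirling k i)"
    by (rule member_le_sum) (use True in auto)
  then show ?thesis by (simp add: sum_stirling)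
qed simp

definition stirling_weight :: "nat \<Rightarrow> nat \<Rightarrow> real" where
  "stirling_weight j k = real (stirling k j) / fact k"

lemma stirling_weight_nonneg: "stirling_weight j k \<ge> 0"
  by (simp add: stirling_weight_def)

lemma stirling_weight_le_1: "stirling_weight j k \<le> 1"
  using stirling_le_fact[of k j] unfolding stirling_weight_def
  by (metis divide_le_eq_1 fact_gt_zero of_nat_fact of_nat_le_iff)

lemma stirling_weight_eq_0: "k < j \<Longrightarrow> stirling_weight j k = 0"
  by (simp add: stirling_weight_def)

lemma sum_stirling_weight_power: "(\<Sum>j\<le>k. stirling_weight j k * y ^ j) = pochhammer y k / fact k"
proof -
  have "(\<Sum>j\<le>k. stirling_weight j k * y ^ j) = (\<Sum>j\<le>k. of_nat (stirling k j) * y ^ j) / fact k"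
    by (simp add: stirling_weight_def sum_divide_distrib)
  then show ?thesis by (simp add: stirling_pochhammer)
qed

definition p_coeff :: "nat \<Rightarrow> nat \<Rightarrow> real" where
  "p_coeff j k = stirling_weight j k / fact k"

definition p_series :: "nat \<Rightarrow> real \<Rightarrow> real" where
  "p_series j v = (\<Sum>k. p_coeff j k * v ^ k)"

definition p_series_theta :: "nat \<Rightarrow> real \<Rightarrow> real" where
  "p_series_theta j v = (\<Sum>k. (of_nat k * p_coeff j k) * v ^ k)"

lemma summable_p_coeff: "summable (\<lambda>k. p_coeff j k * v ^ k)"
proof (rule summable_comparison_test')
  show "summable (\<lambda>k. inverse (fact k) * \<bar>v\<bar> ^ k)" by (rule summable_exp)
  fix k
  have "\<bar>p_coeff j k\<bar> \<le> inverse (fact k)"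
    using stirling_weight_nonneg[of j k] stirling_weight_le_1[of j k]
    by (simp add: p_coeff_def divide_inverse mult_le_cancel_right1)
  then show "norm (p_coeff j k * v ^ k) \<le> inverse (fact k) * \<bar>v\<bar> ^ k"
    by (simp add: abs_mult power_abs mult_right_mono)
qed

lemma summable_p_coeff_diffs: "summable (\<lambda>k. diffs (p_coeff j) k * v ^ k)"
  by (rule termdiff_converges_all) (rule summable_p_coeff)

lemma p_series_theta_eq_deriv: "p_series_theta j v = v * (\<Sum>k. diffs (p_coeff j) k * v ^ k)"
proof -
  have "(\<lambda>k. v * (diffs (p_coeff j) k * v ^ k)) sums (v * (\<Sum>k. diffs (p_coeff j) k * v ^ k))"
    by (intro sums_mult summable_sums summable_p_coeff_diffs)
  then have "(\<lambda>k. (of_nat (Suc k) * p_coeff j (Suc k)) * v ^ Suc k) sums (v * (\<Sum>k. diffs (p_coeff j) k * v ^ k))"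
    by (simp add: diffs_def algebra_simps)
  then have "(\<lambda>k. (of_nat k * p_coeff j k) * v ^ k) sums
      (v * (\<Sum>k. diffs (p_coeff j) k * v ^ k) + (of_nat 0 * p_coeff j 0) * v ^ 0)"
    by (subst sums_Suc_iff[symmetric])
  then show ?thesis unfolding p_series_theta_def by (simp add: sums_iff)
qed

lemma summable_p_series_theta: "summable (\<lambda>k. (of_nat k * p_coeff j k) * v ^ k)"
proof -
  have "summable (\<lambda>k. v * (diffs (p_coeff j) k * v ^ k))"
    by (intro summable_mult summable_p_coeff_diffs)
  then have "summable (\<lambda>k. (of_nat (Suc k) * p_coeff j (Suc k)) * v ^ Suc k)"
    by (simp add: diffs_def algebra_simps)
  then show ?thesis by (subst summable_Suc_iff[symmetric])
qed

lemma p_fun_eq: "p_fun j t = exp (- t) * p_series j t"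
  unfolding p_fun_def p_series_def p_coeff_def stirling_weight_def
  by (simp add: field_simps)

lemma p_series_0: "p_series 0 v = 1"
proof -
  have "(\<lambda>k. p_coeff 0 k * v ^ k) = (\<lambda>k. if k = 0 then 1 else 0)"
    by (auto simp: p_coeff_def stirling_weight_def fun_eq_iff)
  then show ?thesis
    unfolding p_series_def using sums_single[of 0 "\<lambda>_. 1::real"] by (simp add: sums_iff)
qed

lemma p_series_Suc_at_0: "p_series (Suc j) 0 = 0"
  unfolding p_series_def using powser_zero[of "p_coeff (Suc j)"]
  by (simp add: p_coeff_def stirling_weight_def)

lemma p_series_nonneg: "v \<ge> 0 \<Longrightarrow> p_series j v \<ge> 0"
  unfolding p_series_def p_coeff_def
  by (intro suminf_nonneg summable_p_coeff[unfolded p_coeff_def] mult_nonneg_nonneg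
      divide_nonneg_pos stirling_weight_nonneg) auto

lemma isCont_p_series: "isCont (p_series j) v"
  unfolding p_series_def[abs_def] by (rule isCont_powser_converges_everywhere) (rule summable_p_coeff)

lemma isCont_p_series_theta: "isCont (p_series_theta j) v"
  unfolding p_series_theta_def[abs_def]
  by (rule isCont_powser_converges_everywhere) (rule summable_p_series_theta)

lemma p_series_has_derivative:
  "(p_series j has_field_derivative (\<Sum>k. diffs (p_coeff j) k * v ^ k)) (at v)"
  unfolding p_series_def[abs_def]
  by (rule termdiffs_strong_converges_everywhere) (rule summable_p_coeff)

text \<open>The recurrence \<open>stirling (Suc n) (Suc j) = n * stirling n (Suc j) + stirling n j\<close>
  on the level of coefficients.\<close>

lemma diffs_p_series_theta_coeff:
  "diffs (\<lambda>k. of_nat k * p_coeff (Suc j) k) n = of_nat n * p_coeff (Suc j) n + p_coeff j n"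
proof -
  have cancel: "a * a * (s / (a * b * (a * b))) = s / (b * b)" if "a \<noteq> 0" "b \<noteq> 0" for a b s :: real
    using that by (simp add: field_simps)
  have "diffs (\<lambda>k. of_nat k * p_coeff (Suc j) k) n
      = real (Suc n) * real (Suc n) * (real (stirling (Suc n) (Suc j)) / (fact (Suc n) * fact (Suc n)))"
    by (simp add: diffs_def p_coeff_def stirling_weight_def)
  also have "\<dots> = real (stirling (Suc n) (Suc j)) / (fact n * fact n)"
    unfolding fact_Suc of_nat_mult by (rule cancel) auto
  also have "\<dots> = (real n * real (stirling n (Suc j)) + real (stirling n j)) / (fact n * fact n)"
    by simp
  also have "\<dots> = of_nat n * p_coeff (Suc j) n + p_coeff j n"
    by (simp add: p_coeff_def stirling_weight_def add_divide_distrib)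
  finally show ?thesis .
qed

lemma p_series_theta_has_derivative:
  "(p_series_theta (Suc j) has_field_derivative (p_series_theta (Suc j) v + p_series j v)) (at v)"
proof -
  have "(p_series_theta (Suc j) has_field_derivative
      (\<Sum>k. diffs (\<lambda>k. of_nat k * p_coeff (Suc j) k) k * v ^ k)) (at v)"
    unfolding p_series_theta_def[abs_def]
    by (rule termdiffs_strong_converges_everywhere) (rule summable_p_series_theta)
  also have "(\<Sum>k. diffs (\<lambda>k. of_nat k * p_coeff (Suc j) k) k * v ^ k)
      = (\<Sum>k. (of_nat k * p_coeff (Suc j) k) * v ^ k + p_coeff j k * v ^ k)"
    by (simp add: diffs_p_series_theta_coeff algebra_simps)
  also have "\<dots> = p_series_theta (Suc j) v + p_series j v"
    unfolding p_series_theta_def p_series_def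
    by (rule suminf_add[symmetric]) (auto intro: summable_p_series_theta summable_p_coeff)
  finally show ?thesis .
qed

lemma continuous_on_p_fun: "continuous_on A (p_fun j)"
  unfolding p_fun_eq[abs_def]
  by (intro continuous_at_imp_continuous_on ballI continuous_intros isCont_p_series)

lemma p_fun_nonneg: "v \<ge> 0 \<Longrightarrow> p_fun j v \<ge> 0"
  by (simp add: p_fun_eq p_series_nonneg)

lemma p_fun_0: "p_fun 0 t = exp (- t)"
  by (simp add: p_fun_eq p_series_0)

text \<open>Both sides vanish at \<open>0\<close> and have derivative \<open>exp (- v) * p_series j v\<close>.\<close>

lemma integral_p_fun:
  assumes "v \<ge> 0"
  shows "integral {0..v} (p_fun j) = exp (- v) * p_series_theta (Suc j) v"
proof -
  define R where "R v = exp (- v) * p_series_theta (Suc j) v - integral {0..v} (p_fun j)" for v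
  have "\<exists>c. \<forall>x\<in>{0..v}. R x = c"
  proof (rule has_field_derivative_zero_constant)
    fix x assume x: "x \<in> {0..v}"
    have "((\<lambda>x. exp (- x) * p_series_theta (Suc j) x) has_field_derivative
        (- exp (- x) * p_series_theta (Suc j) x + exp (- x) * (p_series_theta (Suc j) x + p_series j x)))
        (at x within {0..v})"
      by (auto intro!: derivative_eq_intros
          p_series_theta_has_derivative[THEN has_field_derivative_at_within] simp: algebra_simps)
    moreover have "((\<lambda>u. integral {0..u} (p_fun j)) has_field_derivative p_fun j x) (at x within {0..v})"
      using integral_has_vector_derivative[OF continuous_on_p_fun x]
      by (simp add: has_real_derivative_iff_has_vector_derivative)
    ultimately show "(R has_field_derivative 0) (at x within {0..v})"
      unfolding R_def[abs_def] using DERIV_diff by (fastforce simp: algebra_simps p_fun_eq)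
  qed simp
  then obtain c where c: "\<And>x. x \<in> {0..v} \<Longrightarrow> R x = c" by blast
  have "R 0 = 0" unfolding R_def p_series_theta_def by (simp add: powser_zero)
  then have "R v = 0" using c[of 0] c[of v] assms by auto
  then show ?thesis unfolding R_def by simp
qed

lemma q_fun_eq:
  "q_fun j x = (if x \<le> 0 then 0 else exp (- x) * p_series_theta (Suc j) x / x)"
  by (cases "x < 0") (auto simp: q_fun_def integral_p_fun)

lemma q_fun_measurable[measurable]: "q_fun j \<in> borel_measurable borel"
proof -
  have "p_series_theta (Suc j) \<in> borel_measurable borel"
    by (intro borel_measurable_continuous_onI continuous_at_imp_continuous_on ballI isCont_p_series_theta)
  then show ?thesis unfolding q_fun_eq[abs_def] by measurable
qed

lemma q_fun_nonneg: "q_fun j x \<ge> 0"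
proof (cases "x > 0")
  case True
  then have "integral {0..x} (p_fun j) \<ge> 0"
    by (intro integral_nonneg integrable_continuous_interval continuous_on_p_fun p_fun_nonneg) auto
  with True show ?thesis by (simp add: q_fun_def)
qed (auto simp: q_fun_eq)

lemma p_series_has_derivative_q:
  assumes "v > 0"
  shows "(p_series (Suc j) has_field_derivative exp v * q_fun j v) (at v)"
proof -
  have "(\<Sum>k. diffs (p_coeff (Suc j)) k * v ^ k) = exp v * q_fun j v"
    using assms by (simp add: q_fun_eq p_series_theta_eq_deriv exp_minus field_simps)
  then show ?thesis using p_series_has_derivative[of "Suc j" v] by simp
qed

text \<open>The antiderivative is \<open>e \<mapsto> - exp (- v) * p_series (Suc j) (v - e)\<close>.\<close>

lemma convolution_exp_q_fun:
  assumes "0 \<le> v"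
  shows "((\<lambda>e. exp (- e) * q_fun j (v - e)) has_integral p_fun (Suc j) v) {0..v}"
proof -
  define F where "F e = - exp (- v) * p_series (Suc j) (v - e)" for e
  have "((\<lambda>e. exp (- e) * q_fun j (v - e)) has_integral (F v - F 0)) {0..v}"
  proof (rule fundamental_theorem_of_calculus_interior)
    show "continuous_on {0..v} F" unfolding F_def
      by (intro continuous_at_imp_continuous_on ballI continuous_intros
          continuous_at_compose[OF _ isCont_p_series, unfolded comp_def])
    fix e assume e: "e \<in> {0<..<v}"
    have "((\<lambda>e. p_series (Suc j) (v - e)) has_field_derivative
        exp (v - e) * q_fun j (v - e) * (- 1)) (at e)"
      by (rule DERIV_chain2[OF p_series_has_derivative_q]) (use e in \<open>auto intro!: derivative_eq_intros\<close>)
    then have "(F has_field_derivative (- exp (- v)) * (exp (v - e) * q_fun j (v - e) * (- 1))) (at e)"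
      unfolding F_def[abs_def] by (rule DERIV_cmult)
    moreover have "(- exp (- v)) * (exp (v - e) * q_fun j (v - e) * (- 1)) = exp (- e) * q_fun j (v - e)"
      by (simp add: mult.assoc[symmetric] exp_add[symmetric])
    ultimately show "(F has_vector_derivative exp (- e) * q_fun j (v - e)) (at e)"
      by (simp only: has_real_derivative_iff_has_vector_derivative)
  qed (use assms in auto)
  moreover have "F v - F 0 = p_fun (Suc j) v" by (simp add: F_def p_series_Suc_at_0 p_fun_eq)
  ultimately show ?thesis by simp
qed

section \<open>The kernel\<close>

lemma space_S: "space S = {0..}"
  by (simp add: S_def)

lemma sets_S_iff: "A \<in> sets S \<longleftrightarrow> A \<in> sets borel \<and> A \<subseteq> {0..}"
  unfolding S_def by (auto simp: sets_restrict_space_iff)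

lemma measurable_S_borel[measurable]: "(\<lambda>x. x) \<in> S \<rightarrow>\<^sub>M borel"
  unfolding S_def by (rule measurable_restrict_space1) simp

lemma measurable_fst_S_borel[measurable]: "fst \<in> S \<Otimes>\<^sub>M M \<rightarrow>\<^sub>M borel"
  using measurable_comp[OF measurable_fst measurable_S_borel] by (simp add: comp_def)

definition unif01 :: "real measure" where
  "unif01 = uniform_measure lborel {0..1}"

definition exp1 :: "real measure" where
  "exp1 = density lborel (\<lambda>x. ennreal (exponential_density 1 x))"

definition noise :: "(real \<times> real) measure" where
  "noise = unif01 \<Otimes>\<^sub>M exp1"

definition shrink :: "real \<Rightarrow> real \<times> real \<Rightarrow> real" where
  "shrink x w = max 0 (x * fst w - snd w)"

definition shrink_kernel :: "real \<Rightarrow> real measure" where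
  "shrink_kernel x = distr noise S (shrink x)"

lemma prob_space_unif01: "prob_space unif01"
  unfolding unif01_def by (rule prob_space_uniform_measure) auto

lemma prob_space_exp1: "prob_space exp1"
  unfolding exp1_def by (rule prob_space_exponential_density) simp

lemma prob_space_noise: "prob_space noise"
  unfolding noise_def by (intro prob_space_pair prob_space_unif01 prob_space_exp1)

lemma sets_unif01[measurable_cong]: "sets unif01 = sets borel"
  by (simp add: unif01_def)

lemma sets_exp1[measurable_cong]: "sets exp1 = sets borel"
  by (simp add: exp1_def)

lemma sets_noise[measurable_cong]: "sets noise = sets (borel \<Otimes>\<^sub>M borel)"
  unfolding noise_def by (intro sets_pair_measure_cong sets_unif01 sets_exp1)

lemma measurable_shrink[measurable]: "(\<lambda>(x, w). shrink x w) \<in> S \<Otimes>\<^sub>M noise \<rightarrow>\<^sub>M S"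
proof -
  have "(\<lambda>(x, w). shrink x w) \<in> S \<Otimes>\<^sub>M (borel \<Otimes>\<^sub>M borel) \<rightarrow>\<^sub>M borel"
    unfolding shrink_def split_beta' by measurable
  then have "(\<lambda>(x, w). shrink x w) \<in> S \<Otimes>\<^sub>M noise \<rightarrow>\<^sub>M borel"
    by (subst measurable_cong_sets[OF sets_pair_measure_cong[OF refl sets_noise] refl])
  then show ?thesis unfolding S_def
    by (intro measurable_restrict_space2) (auto simp: shrink_def)
qed

lemma measurable_shrink_right[measurable]: "shrink x \<in> noise \<rightarrow>\<^sub>M S"
proof -
  have "shrink x \<in> noise \<rightarrow>\<^sub>M borel"
    by (subst measurable_cong_sets[OF sets_noise refl]) (unfold shrink_def, measurable)
  then show ?thesis unfolding S_def
    by (intro measurable_restrict_space2) (auto simp: shrink_def)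
qed

lemma markov_kernel_shrink_kernel: "markov_kernel shrink_kernel"
  unfolding markov_kernel_def shrink_kernel_def
proof (rule measurable_distr_prob_space2[where g="\<lambda>_. noise"])
  show "(\<lambda>x. noise) \<in> S \<rightarrow>\<^sub>M prob_algebra noise"
    by (rule measurable_const) (simp add: space_prob_algebra prob_space_noise)
qed (rule measurable_shrink)

lemma sets_shrink_kernel[simp]: "sets (shrink_kernel x) = sets S"
  by (simp add: shrink_kernel_def)

lemma AE_exp1_nonneg: "AE e in exp1. 0 \<le> e"
  unfolding exp1_def by (subst AE_density) (auto simp: exponential_density_def)

lemma AE_unif01: "AE u in unif01. 0 \<le> u \<and> u < 1"
proof -
  have "AE u in unif01. u \<in> {0..1} \<and> u \<noteq> 1"
    unfolding unif01_def using AE_lborel_singleton[of 1]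
    by (intro AE_uniform_measureI) (auto elim: AE_mp)
  then show ?thesis by eventually_elim auto
qed

lemma AE_noise: "AE w in noise. 0 \<le> fst w \<and> fst w < 1 \<and> 0 \<le> snd w"
proof -
  interpret pair_sigma_finite unif01 exp1
    by (intro pair_sigma_finite.intro prob_space_imp_sigma_finite prob_space_unif01 prob_space_exp1)
  have "AE w in noise. 0 \<le> fst w \<and> fst w < 1"
    unfolding noise_def by (rule AE_pair_measure) (use AE_unif01 in auto)
  moreover have "AE w in noise. 0 \<le> snd w"
    unfolding noise_def by (rule AE_pair_measure) (use AE_exp1_nonneg in auto)
  ultimately show ?thesis by eventually_elim auto
qed

lemma shrink_kernel_0: "measure (shrink_kernel 0) {0} = 1"
proof -
  interpret prob_space noise by (rule prob_space_noise)
  have "measure (shrink_kernel 0) {0} = measure noise (shrink 0 -` {0} \<inter> space noise)"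
    unfolding shrink_kernel_def by (rule measure_distr) (auto simp: sets_S_iff)
  also have "\<dots> = 1"
  proof (rule prob_eq_1[THEN iffD2])
    show "shrink 0 -` {0} \<inter> space noise \<in> sets noise"
      by (rule measurable_sets[OF measurable_shrink_right]) (simp add: sets_S_iff)
    show "AE w in noise. w \<in> shrink 0 -` {0} \<inter> space noise"
      using AE_noise AE_space by eventually_elim (auto simp: shrink_def)
  qed
  finally show ?thesis .
qed

lemma shrink_kernel_lessThan:
  assumes "t > 0"
  shows "measure (shrink_kernel t) {0..<t} = 1"
proof -
  interpret prob_space noise by (rule prob_space_noise)
  have "{0..<t} \<in> sets S" by (auto simp: sets_S_iff)
  have "measure (shrink_kernel t) {0..<t} = measure noise (shrink t -` {0..<t} \<inter> space noise)"
    unfolding shrink_kernel_def by (rule measure_distr) (auto simp: sets_S_iff)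
  also have "\<dots> = 1"
  proof (rule prob_eq_1[THEN iffD2])
    show "shrink t -` {0..<t} \<inter> space noise \<in> sets noise"
      using \<open>{0..<t} \<in> sets S\<close> by (rule measurable_sets[OF measurable_shrink_right])
    show "AE w in noise. w \<in> shrink t -` {0..<t} \<inter> space noise"
      using AE_noise AE_space
    proof eventually_elim
      case (elim w)
      then have "t * fst w < t" using assms by simp
      then have "t * fst w - snd w < t" using elim by linarith
      with elim assms show ?case by (auto simp: shrink_def)
    qed
  qed
  finally show ?thesis .
qed

lemma nn_integral_unif01_scale:
  assumes t: "0 < t" and f: "continuous_on UNIV f" and nonneg: "\<And>x. x \<in> {0..t} \<Longrightarrow> 0 \<le> f x"
  shows "(\<integral>\<^sup>+u. ennreal (f (t * u)) \<partial>unif01) = ennreal (integral {0..t} f / t)"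
proof -
  have [measurable]: "f \<in> borel_measurable borel"
    using f by (rule borel_measurable_continuous_onI)
  have "(\<integral>\<^sup>+x. ennreal (indicator {0..t} x * f x) \<partial>lborel) = ennreal (integral {0..t} f)"
    by (rule nn_integral_has_integral_lebesgue)
       (auto intro!: nonneg integrable_integral integrable_continuous_interval continuous_on_subset[OF f])
  moreover have "(\<integral>\<^sup>+x. ennreal (indicator {0..t} x * f x) \<partial>lborel)
      = ennreal t * (\<integral>\<^sup>+u. ennreal (f (t * u)) \<partial>unif01)"
  proof -
    have "(\<integral>\<^sup>+x. ennreal (indicator {0..t} x * f x) \<partial>lborel)
        = ennreal \<bar>t\<bar> * (\<integral>\<^sup>+u. ennreal (indicator {0..t} (0 + t * u) * f (0 + t * u)) \<partial>lborel)"
      by (rule nn_integral_real_affine) (use t in auto)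
    also have "(\<lambda>u. ennreal (indicator {0..t} (0 + t * u) * f (0 + t * u))) = (\<lambda>u. ennreal (f (t * u)) * indicator {0..1} u)"
      using t by (auto simp: fun_eq_iff indicator_def zero_le_mult_iff)
    also have "(\<integral>\<^sup>+u. ennreal (f (t * u)) * indicator {0..1} u \<partial>lborel) = (\<integral>\<^sup>+u. ennreal (f (t * u)) \<partial>unif01)"
      unfolding unif01_def by (subst nn_integral_uniform_measure) (auto simp: divide_ennreal_def)
    finally show ?thesis using t by simp
  qed
  ultimately have "ennreal t * (\<integral>\<^sup>+u. ennreal (f (t * u)) \<partial>unif01) = ennreal (integral {0..t} f)"
    by simp
  then have "ennreal (1 / t) * (ennreal t * (\<integral>\<^sup>+u. ennreal (f (t * u)) \<partial>unif01)) = ennreal (integral {0..t} f / t)"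
    using t by (simp add: ennreal_mult'[symmetric] integral_nonneg)
  then show ?thesis
    using t by (simp add: mult.assoc[symmetric] ennreal_mult''[symmetric])
qed

text \<open>Conditioning on the uniform variable: an integral against \<open>shrink_kernel t\<close> is an average
  of integrals against \<open>exp1\<close>, and \<open>q_fun\<close> is the average of \<open>p_fun\<close> over \<open>[0, t]\<close>.\<close>

lemma nn_integral_shrink_kernel_eq_q_fun:
  assumes t: "t > 0" and g[measurable]: "g \<in> borel_measurable S"
    and inner: "\<And>v. 0 \<le> v \<Longrightarrow> v < t \<Longrightarrow> (\<integral>\<^sup>+e. g (max 0 (v - e)) \<partial>exp1) = ennreal (p_fun j v)"
  shows "(\<integral>\<^sup>+x. g x \<partial>shrink_kernel t) = ennreal (q_fun j t)"
proof -
  interpret sigma_finite_measure exp1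
    by (intro prob_space_imp_sigma_finite prob_space_exp1)
  have "(\<integral>\<^sup>+x. g x \<partial>shrink_kernel t) = (\<integral>\<^sup>+w. g (shrink t w) \<partial>noise)"
    unfolding shrink_kernel_def by (rule nn_integral_distr) auto
  also have "\<dots> = (\<integral>\<^sup>+u. (\<integral>\<^sup>+e. g (shrink t (u, e)) \<partial>exp1) \<partial>unif01)"
    unfolding noise_def by (rule nn_integral_fst[symmetric]) (simp add: noise_def[symmetric])
  also have "\<dots> = (\<integral>\<^sup>+u. ennreal (p_fun j (t * u)) \<partial>unif01)"
  proof (rule nn_integral_cong_AE)
    show "AE u in unif01. (\<integral>\<^sup>+e. g (shrink t (u, e)) \<partial>exp1) = ennreal (p_fun j (t * u))"
      using AE_unif01
    proof eventually_elim
      case (elim u)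
      then have "0 \<le> t * u" "t * u < t" using t by auto
      then show ?case using inner by (simp add: shrink_def)
    qed
  qed
  also have "\<dots> = ennreal (q_fun j t)"
    using t by (subst nn_integral_unif01_scale) (auto simp: q_fun_def continuous_on_p_fun p_fun_nonneg)
  finally show ?thesis .
qed

lemma emeasure_shrink_kernel_0:
  assumes t: "t > 0"
  shows "emeasure (shrink_kernel t) {0} = ennreal (q_fun 0 t)"
proof -
  have "emeasure (shrink_kernel t) {0} = (\<integral>\<^sup>+x. indicator {0} x \<partial>shrink_kernel t)"
    by (simp add: sets_S_iff)
  also have "\<dots> = ennreal (q_fun 0 t)"
  proof (rule nn_integral_shrink_kernel_eq_q_fun[OF t])
    show "indicator {0} \<in> borel_measurable S" by (simp add: sets_S_iff)
    fix v :: real assume v: "0 \<le> v"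
    interpret prob_space exp1 by (rule prob_space_exp1)
    have "(\<integral>\<^sup>+e. indicator {0} (max 0 (v - e)) \<partial>exp1) = (\<integral>\<^sup>+e. indicator {v<..} e \<partial>exp1)"
    proof (rule nn_integral_cong_AE)
      have "AE e in exp1. e \<noteq> v"
        unfolding exp1_def using AE_lborel_singleton[of v] by (subst AE_density) (auto elim: AE_mp)
      then show "AE e in exp1. indicator {0} (max 0 (v - e)) = (indicator {v<..} e :: ennreal)"
        using AE_exp1_nonneg by eventually_elim (auto simp: indicator_def max_def)
    qed
    also have "\<dots> = emeasure exp1 {e \<in> space exp1. v < e}"
      by (subst nn_integral_indicator) (auto simp: exp1_def intro!: arg_cong2[where f=emeasure])
    also have "\<dots> = ennreal (p_fun 0 v)"
    proof -
      have "distributed exp1 lborel (\<lambda>x. x) (exponential_density 1)"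
        unfolding distributed_def exp1_def by (auto simp: distr_id2)
      from exponential_distributedD_gt[OF this v] show ?thesis
        by (simp add: emeasure_eq_measure p_fun_0)
    qed
    finally show "(\<integral>\<^sup>+e. indicator {0} (max 0 (v - e)) \<partial>exp1) = ennreal (p_fun 0 v)" .
  qed
  finally show ?thesis .
qed

lemma nn_integral_shrink_kernel_q_fun:
  assumes t: "t > 0"
  shows "(\<integral>\<^sup>+x. ennreal (indicator {0<..<t} x * q_fun j x) \<partial>shrink_kernel t) = ennreal (q_fun (Suc j) t)"
proof (rule nn_integral_shrink_kernel_eq_q_fun[OF t])
  show "(\<lambda>x. ennreal (indicator {0<..<t} x * q_fun j x)) \<in> borel_measurable S"
    by measurable
  fix v :: real assume v: "0 \<le> v" "v < t"
  have "(\<integral>\<^sup>+e. ennreal (indicator {0<..<t} (max 0 (v - e)) * q_fun j (max 0 (v - e))) \<partial>exp1)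
     = (\<integral>\<^sup>+e. ennreal (exponential_density 1 e)
          * ennreal (indicator {0<..<t} (max 0 (v - e)) * q_fun j (max 0 (v - e))) \<partial>lborel)"
    unfolding exp1_def by (subst nn_integral_density) auto
  also have "\<dots> = (\<integral>\<^sup>+e. ennreal (indicator {0..v} e * (exp (- e) * q_fun j (v - e))) \<partial>lborel)"
  proof (rule nn_integral_cong_AE)
    show "AE e in lborel. ennreal (exponential_density 1 e)
          * ennreal (indicator {0<..<t} (max 0 (v - e)) * q_fun j (max 0 (v - e)))
        = ennreal (indicator {0..v} e * (exp (- e) * q_fun j (v - e)))"
      using AE_lborel_singleton[of v]
    proof eventually_elim
      case (elim e)
      consider "e < 0" | "0 \<le> e" "e < v" | "v < e" using elim by linarith
      then show ?case
      proof cases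
        case 2
        then have "max 0 (v - e) = v - e" "v - e \<in> {0<..<t}" using v by auto
        with 2 show ?thesis by (simp add: exponential_density_def ennreal_mult'' q_fun_nonneg)
      qed (auto simp: exponential_density_def indicator_def)
    qed
  qed
  also have "\<dots> = ennreal (p_fun (Suc j) v)"
    by (rule nn_integral_has_integral_lebesgue[OF _ convolution_exp_q_fun[OF v(1)]])
       (auto intro!: mult_nonneg_nonneg q_fun_nonneg)
  finally show "(\<integral>\<^sup>+e. ennreal (indicator {0<..<t} (max 0 (v - e)) * q_fun j (max 0 (v - e))) \<partial>exp1)
      = ennreal (p_fun (Suc j) v)" .
qed

section \<open>Finite-dimensional distributions of a chain\<close>

lemma measurable_sets_eq_left: "sets M = sets M' \<Longrightarrow> f \<in> M' \<rightarrow>\<^sub>M N \<Longrightarrow> f \<in> M \<rightarrow>\<^sub>M N"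
  by (subst measurable_cong_sets[of M M' N N]) auto

definition path_space :: "nat \<Rightarrow> (nat \<Rightarrow> real) measure" where
  "path_space n = (\<Pi>\<^sub>M i\<in>{..n}. S)"

definition snoc_path :: "nat \<Rightarrow> (nat \<Rightarrow> real) \<Rightarrow> real \<Rightarrow> (nat \<Rightarrow> real)" where
  "snoc_path n x y = (\<lambda>i\<in>{..Suc n}. if i = Suc n then y else x i)"

definition cons_path :: "nat \<Rightarrow> real \<Rightarrow> (nat \<Rightarrow> real) \<Rightarrow> (nat \<Rightarrow> real)" where
  "cons_path n t y = (\<lambda>i\<in>{..Suc n}. if i = 0 then t else y (i - 1))"

definition transition :: "(real \<Rightarrow> real measure) \<Rightarrow> nat \<Rightarrow> (nat \<Rightarrow> real) \<Rightarrow> (nat \<Rightarrow> real) measure" where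
  "transition K n x = distr (K (x n)) (path_space (Suc n)) (snoc_path n x)"

lemma fdd_0_return: "fdd K t 0 = return (path_space 0) (\<lambda>i\<in>{..0}. t)"
  by (simp add: path_space_def)

lemma fdd_Suc_bind: "fdd K t (Suc n) = fdd K t n \<bind> transition K n"
  unfolding transition_def[abs_def] path_space_def snoc_path_def by simp

lemma space_path_space: "space (path_space n) = PiE {..n} (\<lambda>_. {0..})"
  by (simp add: path_space_def space_PiM space_S)

lemma measurable_path_component[measurable]: "i \<le> n \<Longrightarrow> (\<lambda>x. x i) \<in> path_space n \<rightarrow>\<^sub>M S"
  unfolding path_space_def by (rule measurable_component_singleton) simp

lemma measurable_path_component_borel[measurable]: "i \<le> n \<Longrightarrow> (\<lambda>x. x i) \<in> path_space n \<rightarrow>\<^sub>M borel"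
  using measurable_compose[OF measurable_path_component measurable_S_borel] by simp

lemma measurable_path_prefix: "(\<lambda>\<omega>. \<lambda>i\<in>{..n}. \<omega> !! i) \<in> stream_space S \<rightarrow>\<^sub>M path_space n"
  unfolding path_space_def by (rule measurable_restrict) simp

lemma path_prefix_in_space: "\<omega> \<in> streams {0..} \<Longrightarrow> (\<lambda>i\<in>{..n}. \<omega> !! i) \<in> space (path_space n)"
  by (auto simp: space_path_space streams_iff_snth)

lemma snoc_path_in_space:
  "x \<in> space (path_space n) \<Longrightarrow> 0 \<le> y \<Longrightarrow> snoc_path n x y \<in> space (path_space (Suc n))"
  by (auto simp: space_path_space snoc_path_def PiE_def Pi_def extensional_def)

lemma measurable_snoc_path: "(\<lambda>(x, y). snoc_path n x y) \<in> path_space n \<Otimes>\<^sub>M S \<rightarrow>\<^sub>M path_space (Suc n)"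
proof -
  have "(\<lambda>p. \<lambda>i\<in>{..Suc n}. (if i = Suc n then snd p else fst p i))
      \<in> path_space n \<Otimes>\<^sub>M S \<rightarrow>\<^sub>M (\<Pi>\<^sub>M i\<in>{..Suc n}. S)"
  proof (rule measurable_restrict)
    fix i assume i: "i \<in> {..Suc n}"
    show "(\<lambda>p. if i = Suc n then snd p else fst p i) \<in> path_space n \<Otimes>\<^sub>M S \<rightarrow>\<^sub>M S"
    proof (cases "i = Suc n")
      case False
      with i have "(\<lambda>p. fst p i) \<in> path_space n \<Otimes>\<^sub>M S \<rightarrow>\<^sub>M S"
        by (intro measurable_compose[OF measurable_fst measurable_path_component]) auto
      with False show ?thesis by simp
    qed simp
  qed
  then show ?thesis by (simp add: split_beta' snoc_path_def[abs_def] path_space_def)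
qed

lemma measurable_snoc_path_right:
  "x \<in> space (path_space n) \<Longrightarrow> sets M = sets S \<Longrightarrow> snoc_path n x \<in> M \<rightarrow>\<^sub>M path_space (Suc n)"
  using measurable_sets_eq_left[OF _ measurable_Pair2[OF measurable_snoc_path]] by simp

lemma measurable_cons_path: "0 \<le> t \<Longrightarrow> cons_path n t \<in> path_space n \<rightarrow>\<^sub>M path_space (Suc n)"
  unfolding cons_path_def path_space_def[of "Suc n"]
  by (rule measurable_restrict) (auto simp: space_S)

lemma measurable_singleton_path: "(\<lambda>s. \<lambda>i\<in>{..0::nat}. s) \<in> S \<rightarrow>\<^sub>M path_space 0"
  unfolding path_space_def by (rule measurable_restrict) simp

locale chain_kernel =
  fixes K :: "real \<Rightarrow> real measure"
  assumes markov: "markov_kernel K"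
begin

lemma measurable_K: "K \<in> S \<rightarrow>\<^sub>M prob_algebra S"
  using markov by (simp add: markov_kernel_def)

lemma measurable_K_subprob: "K \<in> S \<rightarrow>\<^sub>M subprob_algebra S"
  using measurable_K by (rule measurable_prob_algebraD)

lemma K_in_prob_algebra: "0 \<le> x \<Longrightarrow> K x \<in> space (prob_algebra S)"
  using measurable_space[OF measurable_K, of x] by (simp add: space_S)

lemma prob_space_K: "0 \<le> x \<Longrightarrow> prob_space (K x)"
  using K_in_prob_algebra by (simp add: space_prob_algebra)

lemma sets_K: "0 \<le> x \<Longrightarrow> sets (K x) = sets S"
  using K_in_prob_algebra by (simp add: space_prob_algebra)

lemma space_K: "0 \<le> x \<Longrightarrow> space (K x) = {0..}"
  using sets_eq_imp_space_eq[OF sets_K] by (simp add: space_S)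

lemma measurable_transition: "transition K n \<in> path_space n \<rightarrow>\<^sub>M prob_algebra (path_space (Suc n))"
  unfolding transition_def[abs_def]
  by (rule measurable_distr_prob_space2[OF measurable_compose[OF measurable_path_component measurable_K]
        measurable_snoc_path]) simp

lemma measurable_transition_subprob: "transition K n \<in> path_space n \<rightarrow>\<^sub>M subprob_algebra (path_space (Suc n))"
  using measurable_transition by (rule measurable_prob_algebraD)

lemma fdd_in_prob_algebra: "0 \<le> t \<Longrightarrow> fdd K t n \<in> space (prob_algebra (path_space n))"
proof (induction n)
  case 0
  then have "(\<lambda>i\<in>{..0::nat}. t) \<in> space (path_space 0)" by (simp add: space_path_space)
  then show ?case unfolding fdd_0_return by (rule measurable_space[OF measurable_return_prob_space])
next
  case (Suc n)
  then have A: "fdd K t n \<in> space (prob_algebra (path_space n))" by simp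
  show ?case unfolding fdd_Suc_bind space_prob_algebra
    using sets_bind'[OF A measurable_transition] prob_space_bind'[OF A measurable_transition] by simp
qed

lemma prob_space_fdd: "0 \<le> t \<Longrightarrow> prob_space (fdd K t n)"
  using fdd_in_prob_algebra by (simp add: space_prob_algebra)

lemma sets_fdd: "0 \<le> t \<Longrightarrow> sets (fdd K t n) = sets (path_space n)"
  using fdd_in_prob_algebra by (simp add: space_prob_algebra)

lemma space_fdd: "0 \<le> t \<Longrightarrow> space (fdd K t n) = space (path_space n)"
  using sets_eq_imp_space_eq[OF sets_fdd] .

lemma space_fdd_not_empty: "0 \<le> t \<Longrightarrow> space (fdd K t n) \<noteq> {}"
  using prob_space_fdd prob_space.not_empty by blast

lemma measurable_fdd: "(\<lambda>s. fdd K s n) \<in> S \<rightarrow>\<^sub>M prob_algebra (path_space n)"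
proof (induction n)
  case 0
  show ?case unfolding fdd_0_return
    by (rule measurable_compose[OF measurable_singleton_path measurable_return_prob_space])
next
  case (Suc n)
  then show ?case unfolding fdd_Suc_bind
    by (rule measurable_bind_prob_space[OF _ measurable_transition])
qed

lemma emeasure_fdd_Suc:
  assumes t: "0 \<le> t" and A: "A \<in> sets (path_space (Suc n))"
  shows "emeasure (fdd K t (Suc n)) A
    = (\<integral>\<^sup>+x. emeasure (K (x n)) (snoc_path n x -` A \<inter> {0..}) \<partial>fdd K t n)"
proof -
  have "emeasure (fdd K t (Suc n)) A = (\<integral>\<^sup>+x. emeasure (transition K n x) A \<partial>fdd K t n)"
    unfolding fdd_Suc_bind
    by (rule emeasure_bind_prob_algebra[OF fdd_in_prob_algebra[OF t] measurable_transition A])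
  also have "\<dots> = (\<integral>\<^sup>+x. emeasure (K (x n)) (snoc_path n x -` A \<inter> {0..}) \<partial>fdd K t n)"
  proof (rule nn_integral_cong)
    fix x assume "x \<in> space (fdd K t n)"
    then have x: "x \<in> space (path_space n)" using space_fdd[OF t] by simp
    then have "0 \<le> x n" by (auto simp: space_path_space)
    then show "emeasure (transition K n x) A = emeasure (K (x n)) (snoc_path n x -` A \<inter> {0..})"
      unfolding transition_def
      using emeasure_distr[OF measurable_snoc_path_right[OF x sets_K] A] space_K by simp
  qed
  finally show ?thesis .
qed

primrec iter_kernel :: "nat \<Rightarrow> real \<Rightarrow> real measure" where
  "iter_kernel 0 x = return S x"
| "iter_kernel (Suc n) x = iter_kernel n x \<bind> K"

lemma measurable_iter_kernel: "iter_kernel n \<in> S \<rightarrow>\<^sub>M prob_algebra S"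
proof (induction n)
  case 0
  then show ?case by (simp add: measurable_return_prob_space[unfolded comp_def])
next
  case (Suc n)
  have "(\<lambda>x. iter_kernel n x \<bind> K) \<in> S \<rightarrow>\<^sub>M prob_algebra S"
    by (rule measurable_bind_prob_space[OF Suc measurable_K])
  then show ?case by simp
qed

lemma measurable_iter_kernel_subprob: "iter_kernel n \<in> S \<rightarrow>\<^sub>M subprob_algebra S"
  using measurable_iter_kernel by (rule measurable_prob_algebraD)

lemma distr_fdd_last: "0 \<le> t \<Longrightarrow> distr (fdd K t n) S (\<lambda>x. x n) = iter_kernel n t"
proof (induction n)
  case 0
  then have "(\<lambda>i\<in>{..0::nat}. t) \<in> space (path_space 0)" by (simp add: space_path_space)
  then show ?case unfolding fdd_0_return by (subst distr_return) auto
next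
  case (Suc n)
  note t = Suc.prems
  have "distr (fdd K t (Suc n)) S (\<lambda>x. x (Suc n))
      = fdd K t n \<bind> (\<lambda>x. distr (transition K n x) S (\<lambda>z. z (Suc n)))"
    unfolding fdd_Suc_bind
    by (rule distr_bind[OF measurable_sets_eq_left[OF sets_fdd[OF t] measurable_transition_subprob]
          space_fdd_not_empty[OF t]]) simp
  also have "\<dots> = fdd K t n \<bind> (\<lambda>x. K (x n))"
  proof (rule bind_cong[OF refl])
    fix x assume "x \<in> space (fdd K t n)"
    then have x: "x \<in> space (path_space n)" using space_fdd[OF t] by simp
    then have xn: "0 \<le> x n" by (auto simp: space_path_space)
    have "distr (transition K n x) S (\<lambda>z. z (Suc n)) = distr (K (x n)) S (\<lambda>y. snoc_path n x y (Suc n))"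
      unfolding transition_def
      by (subst distr_distr[OF _ measurable_snoc_path_right[OF x sets_K[OF xn]]]) (auto simp: comp_def)
    also have "\<dots> = K (x n)" using sets_K[OF xn] by (simp add: snoc_path_def distr_id2)
    finally show "distr (transition K n x) S (\<lambda>z. z (Suc n)) = K (x n)" .
  qed
  also have "\<dots> = distr (fdd K t n) S (\<lambda>x. x n) \<bind> K"
    by (rule bind_distr[symmetric, OF measurable_sets_eq_left[OF sets_fdd[OF t]] measurable_K_subprob
          space_fdd_not_empty[OF t]]) simp
  also have "\<dots> = iter_kernel (Suc n) t" using Suc by simp
  finally show ?case .
qed

lemma iter_kernel_Suc_first: "0 \<le> x \<Longrightarrow> iter_kernel (Suc n) x = K x \<bind> iter_kernel n"
proof (induction n)
  case 0
  have "return S x \<bind> K = K x" by (rule bind_return[OF measurable_K_subprob]) (use 0 in \<open>simp add: space_S\<close>)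
  moreover have "K x \<bind> return S = K x" by (rule bind_return'') (rule sets_K[OF 0])
  ultimately show ?case by simp
next
  case (Suc n)
  have "iter_kernel (Suc (Suc n)) x = (K x \<bind> iter_kernel n) \<bind> K" using Suc by simp
  also have "\<dots> = K x \<bind> (\<lambda>y. iter_kernel n y \<bind> K)"
    by (rule bind_assoc[OF measurable_sets_eq_left[OF sets_K[OF Suc.prems] measurable_iter_kernel_subprob]
          measurable_K_subprob])
  finally show ?case by simp
qed

definition jump_to_0 :: "real \<Rightarrow> ennreal" where
  "jump_to_0 y = indicator {0<..} y * emeasure (K y) {0}"

lemma measurable_jump_to_0[measurable]: "jump_to_0 \<in> borel_measurable S"
proof -
  have "(\<lambda>y. emeasure (K y) {0}) \<in> borel_measurable S"
    using measurable_compose[OF measurable_K_subprob measurable_emeasure_subprob_algebra]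
    by (simp add: sets_S_iff)
  then show ?thesis unfolding jump_to_0_def by measurable
qed

text \<open>The probability, starting from \<open>x\<close>, that \<open>X\<^sub>j > 0 = X\<^sub>j\<^sub>+\<^sub>1\<close>.\<close>

definition exit_prob :: "nat \<Rightarrow> real \<Rightarrow> ennreal" where
  "exit_prob j x = (\<integral>\<^sup>+y. jump_to_0 y \<partial>iter_kernel j x)"

lemma exit_prob_0: "0 < x \<Longrightarrow> exit_prob 0 x = emeasure (K x) {0}"
  unfolding exit_prob_def iter_kernel.simps
  by (subst nn_integral_return) (auto simp: space_S jump_to_0_def)

lemma exit_prob_Suc: "0 \<le> x \<Longrightarrow> exit_prob (Suc j) x = (\<integral>\<^sup>+y. exit_prob j y \<partial>K x)"
  unfolding exit_prob_def iter_kernel_Suc_first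
  by (rule nn_integral_bind[OF measurable_jump_to_0 measurable_sets_eq_left[OF sets_K measurable_iter_kernel_subprob]])

lemma emeasure_fdd_exit:
  assumes t: "0 \<le> t"
  shows "emeasure (fdd K t (Suc j)) {x \<in> space (path_space (Suc j)). 0 < x j \<and> x (Suc j) = 0} = exit_prob j t"
proof -
  let ?E = "{x \<in> space (path_space (Suc j)). 0 < x j \<and> x (Suc j) = 0}"
  have "?E \<in> sets (path_space (Suc j))" by measurable
  then have "emeasure (fdd K t (Suc j)) ?E
      = (\<integral>\<^sup>+x. emeasure (K (x j)) (snoc_path j x -` ?E \<inter> {0..}) \<partial>fdd K t j)"
    by (rule emeasure_fdd_Suc[OF t])
  also have "\<dots> = (\<integral>\<^sup>+x. jump_to_0 (x j) \<partial>fdd K t j)"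
  proof (rule nn_integral_cong)
    fix x assume "x \<in> space (fdd K t j)"
    then have "x \<in> space (path_space j)" using space_fdd[OF t] by simp
    then have "snoc_path j x -` ?E \<inter> {0..} = (if 0 < x j then {0} else {})"
      using snoc_path_in_space by (auto simp: snoc_path_def)
    then show "emeasure (K (x j)) (snoc_path j x -` ?E \<inter> {0..}) = jump_to_0 (x j)"
      by (simp add: jump_to_0_def)
  qed
  also have "\<dots> = (\<integral>\<^sup>+y. jump_to_0 y \<partial>distr (fdd K t j) S (\<lambda>x. x j))"
    by (rule nn_integral_distr[symmetric, OF measurable_sets_eq_left[OF sets_fdd[OF t]]]) auto
  also have "\<dots> = exit_prob j t" by (simp add: distr_fdd_last[OF t] exit_prob_def)
  finally show ?thesis .
qed

lemma fdd_Suc_0_first_step: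
  assumes t: "0 \<le> t"
  shows "fdd K t (Suc 0) = K t \<bind> (\<lambda>s. distr (fdd K s 0) (path_space (Suc 0)) (cons_path 0 t))"
proof -
  have t0: "(\<lambda>i\<in>{..0::nat}. t) \<in> space (path_space 0)" using t by (simp add: space_path_space)
  have "fdd K t (Suc 0) = transition K 0 (\<lambda>i\<in>{..0}. t)"
    unfolding fdd_Suc_bind fdd_0_return by (rule bind_return[OF measurable_transition_subprob t0])
  also have "\<dots> = distr (K t) (path_space 1) (\<lambda>s. cons_path 0 t (\<lambda>i\<in>{..0}. s))"
    unfolding transition_def by (intro distr_cong) (auto simp: snoc_path_def cons_path_def fun_eq_iff)
  also have "\<dots> = K t \<bind> (\<lambda>s. return (path_space 1) (cons_path 0 t (\<lambda>i\<in>{..0}. s)))"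
  proof (rule bind_return_distr'[symmetric])
    show "space (K t) \<noteq> {}" using space_K[OF t] by auto
    show "(\<lambda>s. cons_path 0 t (\<lambda>i\<in>{..0::nat}. s)) \<in> K t \<rightarrow>\<^sub>M path_space 1"
      using measurable_sets_eq_left[OF sets_K[OF t]
          measurable_compose[OF measurable_singleton_path measurable_cons_path[OF t]]] by simp
  qed
  also have "\<dots> = K t \<bind> (\<lambda>s. distr (fdd K s 0) (path_space (Suc 0)) (cons_path 0 t))"
  proof (rule bind_cong[OF refl])
    fix s assume "s \<in> space (K t)"
    then have "(\<lambda>i\<in>{..0::nat}. s) \<in> space (path_space 0)" using space_K[OF t] by (simp add: space_path_space)
    then show "return (path_space 1) (cons_path 0 t (\<lambda>i\<in>{..0}. s))
        = distr (fdd K s 0) (path_space (Suc 0)) (cons_path 0 t)"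
      unfolding fdd_0_return by (subst distr_return[OF measurable_cons_path[OF t]]) auto
  qed
  finally show ?thesis by simp
qed

lemma transition_cons_path:
  assumes t: "0 \<le> t" and y: "y \<in> space (path_space n)"
  shows "transition K (Suc n) (cons_path n t y)
    = distr (transition K n y) (path_space (Suc (Suc n))) (cons_path (Suc n) t)"
proof -
  have "0 \<le> y n" using y by (auto simp: space_path_space)
  then have "distr (transition K n y) (path_space (Suc (Suc n))) (cons_path (Suc n) t)
      = distr (K (y n)) (path_space (Suc (Suc n))) (cons_path (Suc n) t \<circ> snoc_path n y)"
    unfolding transition_def
    by (intro distr_distr measurable_cons_path[OF t] measurable_snoc_path_right[OF y sets_K])
  also have "\<dots> = transition K (Suc n) (cons_path n t y)"
    unfolding transition_def by (rule distr_cong) (auto simp: cons_path_def snoc_path_def fun_eq_iff)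
  finally show ?thesis by simp
qed

lemma distr_fdd_cons_path_bind:
  assumes t: "0 \<le> t" and s: "0 \<le> s"
  shows "distr (fdd K s n) (path_space (Suc n)) (cons_path n t) \<bind> transition K (Suc n)
    = distr (fdd K s (Suc n)) (path_space (Suc (Suc n))) (cons_path (Suc n) t)"
proof -
  have "distr (fdd K s n) (path_space (Suc n)) (cons_path n t) \<bind> transition K (Suc n)
      = fdd K s n \<bind> (\<lambda>y. transition K (Suc n) (cons_path n t y))"
    by (rule bind_distr[OF measurable_sets_eq_left[OF sets_fdd[OF s] measurable_cons_path[OF t]]
          measurable_transition_subprob space_fdd_not_empty[OF s]])
  also have "\<dots> = fdd K s n \<bind> (\<lambda>y. distr (transition K n y) (path_space (Suc (Suc n))) (cons_path (Suc n) t))"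
    by (intro bind_cong refl transition_cons_path[OF t]) (simp add: space_fdd[OF s])
  also have "\<dots> = distr (fdd K s (Suc n)) (path_space (Suc (Suc n))) (cons_path (Suc n) t)"
    unfolding fdd_Suc_bind
    by (rule distr_bind[symmetric, OF measurable_sets_eq_left[OF sets_fdd[OF s] measurable_transition_subprob]
          space_fdd_not_empty[OF s] measurable_cons_path[OF t]])
  finally show ?thesis .
qed

lemma fdd_Suc_first_step:
  assumes "0 \<le> t"
  shows "fdd K t (Suc n) = K t \<bind> (\<lambda>s. distr (fdd K s n) (path_space (Suc n)) (cons_path n t))"
  using assms
proof (induction n arbitrary: t)
  case 0
  then show ?case by (rule fdd_Suc_0_first_step)
next
  case (Suc n)
  note t = Suc.prems
  have "(\<lambda>s. distr (fdd K s n) (path_space (Suc n)) (cons_path n t)) \<in> S \<rightarrow>\<^sub>M prob_algebra (path_space (Suc n))"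
    by (rule measurable_compose[OF measurable_fdd measurable_distr_prob_space[OF measurable_cons_path[OF t]]])
  then have meas: "(\<lambda>s. distr (fdd K s n) (path_space (Suc n)) (cons_path n t)) \<in> K t \<rightarrow>\<^sub>M subprob_algebra (path_space (Suc n))"
    by (rule measurable_sets_eq_left[OF sets_K[OF t] measurable_prob_algebraD])
  have "fdd K t (Suc (Suc n)) = (K t \<bind> (\<lambda>s. distr (fdd K s n) (path_space (Suc n)) (cons_path n t))) \<bind> transition K (Suc n)"
    using Suc.IH[OF t] by (simp only: fdd_Suc_bind[of K t "Suc n"])
  also have "\<dots> = K t \<bind> (\<lambda>s. distr (fdd K s n) (path_space (Suc n)) (cons_path n t) \<bind> transition K (Suc n))"
    by (rule bind_assoc[OF meas measurable_transition_subprob])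
  also have "\<dots> = K t \<bind> (\<lambda>s. distr (fdd K s (Suc n)) (path_space (Suc (Suc n))) (cons_path (Suc n) t))"
  proof (rule bind_cong[OF refl])
    fix s assume "s \<in> space (K t)"
    then show "distr (fdd K s n) (path_space (Suc n)) (cons_path n t) \<bind> transition K (Suc n)
        = distr (fdd K s (Suc n)) (path_space (Suc (Suc n))) (cons_path (Suc n) t)"
      using space_K[OF t] by (intro distr_fdd_cons_path_bind[OF t]) simp
  qed
  finally show ?case .
qed

end

section \<open>Kernels with absorbing state \<open>0\<close> and decreasing paths\<close>

lemma finite_card_eq_iff:
  "(finite A \<and> card A = j) \<longleftrightarrow> (\<exists>N. card (A \<inter> {..N}) = j \<and> (\<forall>n>N. n \<notin> (A::nat set)))"
proof
  assume a: "finite A \<and> card A = j"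
  define N where "N = (if A = {} then 0 else Max A)"
  have "A \<inter> {..N} = A" "\<forall>n>N. n \<notin> A" using a by (auto simp: N_def split: if_splits)
  with a show "\<exists>N. card (A \<inter> {..N}) = j \<and> (\<forall>n>N. n \<notin> A)" by (intro exI[of _ N]) auto
next
  assume "\<exists>N. card (A \<inter> {..N}) = j \<and> (\<forall>n>N. n \<notin> A)"
  then obtain N where N: "card (A \<inter> {..N}) = j" "\<forall>n>N. n \<notin> A" by blast
  then have "A \<inter> {..N} = A" by (auto simp: not_le[symmetric])
  with N show "finite A \<and> card A = j" by (metis finite_Int finite_atMost)
qed

lemma measurable_snth_borel[measurable]: "(\<lambda>\<omega>. \<omega> !! n) \<in> stream_space S \<rightarrow>\<^sub>M borel"
  using measurable_compose[OF measurable_snth measurable_S_borel] by simp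

lemma sets_visits_eq[measurable]: "visits_eq t j \<in> sets (stream_space S)"
proof -
  have card_eq: "real (card ({n. n \<ge> 1 \<and> \<omega> !! n \<in> {0<..<t}} \<inter> {..N}))
      = (\<Sum>n\<le>N. if 1 \<le> n \<and> 0 < \<omega> !! n \<and> \<omega> !! n < t then 1 else 0)" for \<omega> :: "real stream" and N
    by (simp add: sum.If_cases Int_def conj_commute)
  have "visits_eq t j = {\<omega> \<in> space (stream_space S).
      \<exists>N. (\<Sum>n\<le>N. if 1 \<le> n \<and> 0 < \<omega> !! n \<and> \<omega> !! n < t then 1 else 0) = real j \<and>
        (\<forall>n. N < n \<longrightarrow> \<not> (1 \<le> n \<and> 0 < \<omega> !! n \<and> \<omega> !! n < t))}"
    unfolding visits_eq_def finite_card_eq_iff space_stream_space space_S card_eq[symmetric] by simp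
  also have "\<dots> \<in> sets (stream_space S)" by measurable
  finally show ?thesis .
qed

lemma positive_times_eq_atLeastAtMost:
  fixes x :: "nat \<Rightarrow> real"
  assumes "antimono x" and nonneg: "\<And>n. 0 \<le> x n" and "0 < x m" "x (Suc m) = 0"
  shows "{n. 1 \<le> n \<and> 0 < x n} = {1..m}"
proof -
  have "0 < x n \<longleftrightarrow> n \<le> m" for n
  proof
    assume "0 < x n"
    show "n \<le> m"
    proof (rule ccontr)
      assume "\<not> n \<le> m"
      then have "Suc m \<le> n" by simp
      then have "x n \<le> x (Suc m)" by (rule antimonoD[OF \<open>antimono x\<close>])
      with \<open>0 < x n\<close> \<open>x (Suc m) = 0\<close> show False by simp
    qed
  next
    assume "n \<le> m"
    then have "x m \<le> x n" by (rule antimonoD[OF \<open>antimono x\<close>])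
    with \<open>0 < x m\<close> show "0 < x n" by simp
  qed
  then show ?thesis by (simp add: set_eq_iff)
qed

lemma card_visits_iff_last_positive:
  fixes x :: "nat \<Rightarrow> real"
  assumes nonneg: "\<And>n. 0 \<le> x n" and x0: "x 0 = t" and t: "0 < t"
    and step: "\<And>n. (0 < x n \<longrightarrow> x (Suc n) < x n) \<and> (x n = 0 \<longrightarrow> x (Suc n) = 0)"
  shows "(finite {n. n \<ge> 1 \<and> x n \<in> {0<..<t}} \<and> card {n. n \<ge> 1 \<and> x n \<in> {0<..<t}} = j)
    \<longleftrightarrow> (0 < x j \<and> x (Suc j) = 0)"
proof -
  have "x (Suc n) \<le> x n" for n
    using step[of n] nonneg[of n] by (cases "x n = 0") auto
  then have anti: "antimono x" by (simp add: antimono_iff_le_Suc)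
  then have "n \<ge> 1 \<Longrightarrow> x n < t" for n
    using antimonoD[OF anti, of 1 n] step[of 0] x0 t by auto
  then have visits: "{n. n \<ge> 1 \<and> x n \<in> {0<..<t}} = {n. 1 \<le> n \<and> 0 < x n}" by auto
  show ?thesis unfolding visits
  proof
    assume card: "finite {n. 1 \<le> n \<and> 0 < x n} \<and> card {n. 1 \<le> n \<and> 0 < x n} = j"
    define m where "m = Max (insert 0 {n. 1 \<le> n \<and> 0 < x n})"
    have "m = 0 \<or> m \<in> {n. 1 \<le> n \<and> 0 < x n}"
      using Max_in[of "insert 0 {n. 1 \<le> n \<and> 0 < x n}"] card by (auto simp: m_def)
    then have pos: "0 < x m" using x0 t by auto
    have "Suc m \<notin> {n. 1 \<le> n \<and> 0 < x n}"
    proof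
      assume "Suc m \<in> {n. 1 \<le> n \<and> 0 < x n}"
      then have "Suc m \<le> m" unfolding m_def using card by (intro Max_ge) auto
      then show False by simp
    qed
    then have zero: "x (Suc m) = 0" using nonneg[of "Suc m"] by simp
    with card positive_times_eq_atLeastAtMost[OF anti nonneg pos] have "m = j" by simp
    with pos zero show "0 < x j \<and> x (Suc j) = 0" by simp
  next
    assume "0 < x j \<and> x (Suc j) = 0"
    then have "{n. 1 \<le> n \<and> 0 < x n} = {1..j}"
      by (intro positive_times_eq_atLeastAtMost[OF anti nonneg]) auto
    then show "finite {n. 1 \<le> n \<and> 0 < x n} \<and> card {n. 1 \<le> n \<and> 0 < x n} = j" by simp
  qed
qed

locale decreasing_kernel = chain_kernel +
  assumes absorbing: "measure (K 0) {0} = 1"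
    and decreasing: "\<And>t. 0 < t \<Longrightarrow> measure (K t) {0..<t} = 1"
begin

lemma K_0: "K 0 = return S 0"
proof (rule measure_eqI)
  interpret prob_space "K 0" using prob_space_K[of 0] by simp
  show "sets (K 0) = sets (return S 0)" using sets_K[of 0] by simp
  have "{0} \<in> sets (K 0)" using sets_K[of 0] by (simp add: sets_S_iff)
  then have ae: "AE x in K 0. x = 0" using absorbing by (auto dest: AE_prob_1)
  fix A assume A: "A \<in> sets (K 0)"
  then have "emeasure (K 0) A = emeasure (K 0) (if 0 \<in> A then {0} else {})"
    using \<open>{0} \<in> sets (K 0)\<close> by (intro emeasure_eq_AE) (use ae in auto)
  with A absorbing show "emeasure (K 0) A = emeasure (return S 0) A"
    using sets_K[of 0] by (simp add: emeasure_eq_measure)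
qed

lemma exit_prob_at_0: "exit_prob j 0 = 0"
proof -
  have "iter_kernel j 0 = return S 0"
  proof (induction j)
    case (Suc j)
    have "return S 0 \<bind> K = K 0" by (rule bind_return[OF measurable_K_subprob]) (simp add: space_S)
    with Suc show ?case by (simp add: K_0)
  qed simp
  then show ?thesis unfolding exit_prob_def
    by (simp add: nn_integral_return[OF _ measurable_jump_to_0] space_S) (simp add: jump_to_0_def)
qed

lemma AE_K_step: "0 \<le> s \<Longrightarrow> AE y in K s. (0 < s \<longrightarrow> y < s) \<and> (s = 0 \<longrightarrow> y = 0)"
proof (cases "s = 0")
  case True
  have "Measurable.pred S (\<lambda>y. y = 0)" by measurable
  then have "AE y in return S 0. y = 0" by (subst AE_return) (auto simp: space_S)
  then show ?thesis unfolding True K_0 by simp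
next
  case False
  assume "0 \<le> s"
  with False have s: "0 < s" by simp
  interpret prob_space "K s" using prob_space_K s by simp
  have "{0..<s} \<in> sets (K s)" using sets_K s by (auto simp: sets_S_iff)
  then have "AE y in K s. y \<in> {0..<s}" using decreasing[OF s] by (intro AE_prob_1) auto
  with s show ?thesis by (auto elim: AE_mp)
qed

lemma exit_prob_Suc_eq_q_fun_integral:
  assumes t: "0 < t" and IH: "\<And>y. 0 < y \<Longrightarrow> exit_prob j y = ennreal (q_fun j y)"
  shows "exit_prob (Suc j) t = (\<integral>\<^sup>+x. ennreal (indicator {0<..<t} x * q_fun j x) \<partial>K t)"
  unfolding exit_prob_Suc[OF less_imp_le[OF t]]
proof (rule nn_integral_cong_AE)
  show "AE x in K t. exit_prob j x = ennreal (indicator {0<..<t} x * q_fun j x)"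
    using AE_K_step[OF less_imp_le[OF t]] AE_space
    by eventually_elim (use t in \<open>auto simp: IH exit_prob_at_0 space_K le_less\<close>)
qed

context
  fixes t :: real and P :: "real stream measure"
  assumes t: "0 < t" and law: "chain_law K t P"
begin

lemma sets_P: "sets P = sets (stream_space S)"
  using law by (simp add: chain_law_def)

lemma space_P: "space P = streams {0..}"
  using sets_eq_imp_space_eq[OF sets_P] by (simp add: space_stream_space space_S)

lemma measurable_path_prefix_P: "(\<lambda>\<omega>. \<lambda>i\<in>{..n}. \<omega> !! i) \<in> P \<rightarrow>\<^sub>M path_space n"
  by (rule measurable_sets_eq_left[OF sets_P measurable_path_prefix])

lemma emeasure_P_prefix:
  assumes B: "B \<in> sets (path_space n)"
  shows "emeasure P {\<omega>\<in>space P. (\<lambda>i\<in>{..n}. \<omega> !! i) \<in> B} = emeasure (fdd K t n) B"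
proof -
  have "emeasure (fdd K t n) B = emeasure (distr P (path_space n) (\<lambda>\<omega>. \<lambda>i\<in>{..n}. \<omega> !! i)) B"
    using law by (simp add: chain_law_def path_space_def)
  also have "\<dots> = emeasure P ((\<lambda>\<omega>. \<lambda>i\<in>{..n}. \<omega> !! i) -` B \<inter> space P)"
    by (rule emeasure_distr[OF measurable_path_prefix_P B])
  finally show ?thesis by (simp add: vimage_def Int_def conj_commute)
qed

lemma sets_P_prefix: "B \<in> sets (path_space n) \<Longrightarrow> {\<omega>\<in>space P. (\<lambda>i\<in>{..n}. \<omega> !! i) \<in> B} \<in> sets P"
  using measurable_sets[OF measurable_path_prefix_P] by (simp add: vimage_def Int_def conj_commute)

lemma AE_P_prefix:
  assumes B: "B \<in> sets (path_space n)" and null: "emeasure (fdd K t n) B = 0"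
  shows "AE \<omega> in P. (\<lambda>i\<in>{..n}. \<omega> !! i) \<notin> B"
proof (rule AE_I')
  show "{\<omega>\<in>space P. (\<lambda>i\<in>{..n}. \<omega> !! i) \<in> B} \<in> null_sets P"
    using emeasure_P_prefix[OF B] null sets_P_prefix[OF B] by (intro null_setsI) auto
qed auto

lemma AE_P_start: "AE \<omega> in P. \<omega> !! 0 = t"
proof -
  let ?B = "{x \<in> space (path_space 0). x 0 \<noteq> t}"
  have B: "?B \<in> sets (path_space 0)" by measurable
  have "(\<lambda>i\<in>{..0::nat}. t) \<in> space (path_space 0)" using t by (simp add: space_path_space)
  with B have "emeasure (fdd K t 0) ?B = 0" unfolding fdd_0_return by simp
  with B have "AE \<omega> in P. (\<lambda>i\<in>{..0}. \<omega> !! i) \<notin> ?B" by (rule AE_P_prefix)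
  then show ?thesis
    using AE_space by eventually_elim (use path_prefix_in_space[of _ 0] in \<open>auto simp: space_P\<close>)
qed

lemma AE_P_step:
  "AE \<omega> in P. \<forall>n. (0 < \<omega> !! n \<longrightarrow> \<omega> !! Suc n < \<omega> !! n) \<and> (\<omega> !! n = 0 \<longrightarrow> \<omega> !! Suc n = 0)"
proof (subst AE_all_countable, intro allI)
  fix n
  define Q where "Q s y \<longleftrightarrow> (0 < s \<longrightarrow> y < s) \<and> (s = 0 \<longrightarrow> y = 0)" for s y :: real
  let ?B = "{x \<in> space (path_space (Suc n)). \<not> Q (x n) (x (Suc n))}"
  have B: "?B \<in> sets (path_space (Suc n))" unfolding Q_def by measurable
  have "emeasure (fdd K t (Suc n)) ?B = (\<integral>\<^sup>+x. emeasure (K (x n)) (snoc_path n x -` ?B \<inter> {0..}) \<partial>fdd K t n)"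
    using t by (intro emeasure_fdd_Suc B) simp
  also have "\<dots> = (\<integral>\<^sup>+x. 0 \<partial>fdd K t n)"
  proof (rule nn_integral_cong)
    fix x assume "x \<in> space (fdd K t n)"
    then have x: "x \<in> space (path_space n)" using space_fdd t by simp
    then have xn: "0 \<le> x n" by (auto simp: space_path_space)
    have "snoc_path n x y \<in> ?B \<longleftrightarrow> \<not> Q (x n) y" if "0 \<le> y" for y
      using snoc_path_in_space[OF x that] by (simp add: snoc_path_def)
    then have "snoc_path n x -` ?B \<inter> {0..} = {y \<in> space (K (x n)). \<not> Q (x n) y}"
      using space_K[OF xn] by auto
    also have "emeasure (K (x n)) \<dots> = 0"
    proof (rule AE_iff_measurable[THEN iffD1])
      show "{y \<in> space (K (x n)). \<not> Q (x n) y} \<in> sets (K (x n))"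
        unfolding sets_K[OF xn] sets_eq_imp_space_eq[OF sets_K[OF xn]] Q_def by measurable
      show "AE y in K (x n). Q (x n) y"
        unfolding Q_def by (rule AE_K_step[OF xn])
    qed simp
    finally show "emeasure (K (x n)) (snoc_path n x -` ?B \<inter> {0..}) = 0" .
  qed
  finally have "AE \<omega> in P. (\<lambda>i\<in>{..Suc n}. \<omega> !! i) \<notin> ?B" by (intro AE_P_prefix B) simp
  then show "AE \<omega> in P. (0 < \<omega> !! n \<longrightarrow> \<omega> !! Suc n < \<omega> !! n) \<and> (\<omega> !! n = 0 \<longrightarrow> \<omega> !! Suc n = 0)"
    using AE_space
  proof eventually_elim
    case (elim \<omega>)
    then have "(\<lambda>i\<in>{..Suc n}. \<omega> !! i) \<in> space (path_space (Suc n))"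
      by (intro path_prefix_in_space) (simp add: space_P)
    with elim show ?case by (simp add: Q_def)
  qed
qed

lemma emeasure_visits_eq: "emeasure P (visits_eq t j) = exit_prob j t"
proof -
  let ?E = "{x \<in> space (path_space (Suc j)). 0 < x j \<and> x (Suc j) = 0}"
  have E: "?E \<in> sets (path_space (Suc j))" by measurable
  have "emeasure P (visits_eq t j) = emeasure P {\<omega>\<in>space P. (\<lambda>i\<in>{..Suc j}. \<omega> !! i) \<in> ?E}"
  proof (rule emeasure_eq_AE)
    show "AE \<omega> in P. (\<omega> \<in> visits_eq t j) = (\<omega> \<in> {\<omega> \<in> space P. (\<lambda>i\<in>{..Suc j}. \<omega> !! i) \<in> ?E})"
      using AE_P_start AE_P_step AE_space
    proof eventually_elim
      case (elim \<omega>)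
      then have \<omega>: "\<omega> \<in> streams {0..}" by (simp add: space_P)
      then have "\<And>n. 0 \<le> \<omega> !! n" by (auto simp: streams_iff_snth)
      then have "(finite {n. n \<ge> 1 \<and> \<omega> !! n \<in> {0<..<t}} \<and> card {n. n \<ge> 1 \<and> \<omega> !! n \<in> {0<..<t}} = j)
          \<longleftrightarrow> 0 < \<omega> !! j \<and> \<omega> !! (Suc j) = 0"
        by (rule card_visits_iff_last_positive[of "\<lambda>n. \<omega> !! n"]) (use elim t in auto)
      with \<omega> have "\<omega> \<in> visits_eq t j \<longleftrightarrow> 0 < \<omega> !! j \<and> \<omega> !! (Suc j) = 0"
        by (simp add: visits_eq_def)
      moreover have "(\<lambda>i\<in>{..Suc j}. \<omega> !! i) \<in> space (path_space (Suc j))"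
        by (rule path_prefix_in_space[OF \<omega>])
      ultimately show ?case using elim by simp
    qed
  qed (use sets_P sets_P_prefix[OF E] in auto)
  also have "\<dots> = emeasure (fdd K t (Suc j)) ?E" by (rule emeasure_P_prefix[OF E])
  also have "\<dots> = exit_prob j t" using t by (intro emeasure_fdd_exit) simp
  finally show ?thesis .
qed

end

end

section \<open>Existence\<close>

lemma emeasure_distr_nn_integral:
  assumes "f \<in> M \<rightarrow>\<^sub>M N" "A \<in> sets N"
  shows "emeasure (distr M N f) A = (\<integral>\<^sup>+x. indicator A (f x) \<partial>M)"
proof -
  have "emeasure (distr M N f) A = (\<integral>\<^sup>+y. indicator A y \<partial>distr M N f)"
    using assms by simp
  also have "\<dots> = (\<integral>\<^sup>+x. indicator A (f x) \<partial>M)"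
    using assms by (intro nn_integral_distr) auto
  finally show ?thesis .
qed

lemma (in prob_space) distr_stream_space_Stream:
  assumes f[measurable]: "f \<in> stream_space M \<rightarrow>\<^sub>M N"
  shows "distr (stream_space M) N f = M \<bind> (\<lambda>x. distr (stream_space M) N (\<lambda>\<omega>. f (x ## \<omega>)))"
proof -
  interpret S: prob_space "stream_space M" by (rule prob_space_stream_space)
  have meas: "(\<lambda>x. distr (stream_space M) N (\<lambda>\<omega>. f (x ## \<omega>))) \<in> M \<rightarrow>\<^sub>M subprob_algebra N"
    by (rule measurable_distr2[where g="\<lambda>_. stream_space M" and M="stream_space M"], measurable)
  show ?thesis
  proof (rule measure_eqI)
    show "sets (distr (stream_space M) N f) = sets (M \<bind> (\<lambda>x. distr (stream_space M) N (\<lambda>\<omega>. f (x ## \<omega>))))"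
      using sets_bind[OF sets_kernel[OF meas] not_empty] by simp
    fix A assume "A \<in> sets (distr (stream_space M) N f)"
    then have A[measurable]: "A \<in> sets N" by simp
    have "emeasure (distr (stream_space M) N f) A = (\<integral>\<^sup>+\<omega>. indicator A (f \<omega>) \<partial>stream_space M)"
      by (rule emeasure_distr_nn_integral[OF f A])
    also have "\<dots> = (\<integral>\<^sup>+x. (\<integral>\<^sup>+\<omega>. indicator A (f (x ## \<omega>)) \<partial>stream_space M) \<partial>M)"
      by (rule nn_integral_stream_space) measurable
    also have "\<dots> = (\<integral>\<^sup>+x. emeasure (distr (stream_space M) N (\<lambda>\<omega>. f (x ## \<omega>))) A \<partial>M)"
      by (intro nn_integral_cong emeasure_distr_nn_integral[symmetric] A) measurable
    also have "\<dots> = emeasure (M \<bind> (\<lambda>x. distr (stream_space M) N (\<lambda>\<omega>. f (x ## \<omega>)))) A"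
      by (rule emeasure_bind[symmetric, OF not_empty meas A])
    finally show "emeasure (distr (stream_space M) N f) A
        = emeasure (M \<bind> (\<lambda>x. distr (stream_space M) N (\<lambda>\<omega>. f (x ## \<omega>)))) A" .
  qed
qed

interpretation shrink: decreasing_kernel shrink_kernel
  by unfold_locales (simp_all add: markov_kernel_shrink_kernel shrink_kernel_0 shrink_kernel_lessThan)

primrec shrink_chain :: "real \<Rightarrow> (real \<times> real) stream \<Rightarrow> nat \<Rightarrow> real" where
  "shrink_chain t \<omega> 0 = t"
| "shrink_chain t \<omega> (Suc n) = shrink (shrink_chain t \<omega> n) (\<omega> !! n)"

definition shrink_chain_law :: "real \<Rightarrow> real stream measure" where
  "shrink_chain_law t = distr (stream_space noise) (stream_space S) (\<lambda>\<omega>. to_stream (shrink_chain t \<omega>))"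

lemma shrink_chain_Stream: "shrink_chain t (w ## \<omega>) (Suc n) = shrink_chain (shrink t w) \<omega> n"
  by (induction n) auto

lemma measurable_shrink_chain[measurable]:
  assumes "0 \<le> t"
  shows "(\<lambda>\<omega>. shrink_chain t \<omega> n) \<in> stream_space noise \<rightarrow>\<^sub>M S"
proof (induction n)
  case 0
  then show ?case using assms by (simp add: space_S)
next
  case (Suc n)
  have "(\<lambda>\<omega>. (shrink_chain t \<omega> n, \<omega> !! n)) \<in> stream_space noise \<rightarrow>\<^sub>M S \<Otimes>\<^sub>M noise"
    by (rule measurable_Pair[OF Suc measurable_snth])
  from measurable_compose[OF this measurable_shrink] show ?case by simp
qed

lemma measurable_shrink_chain_prefix:
  "0 \<le> t \<Longrightarrow> (\<lambda>\<omega>. \<lambda>i\<in>{..n}. shrink_chain t \<omega> i) \<in> stream_space noise \<rightarrow>\<^sub>M path_space n"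
  unfolding path_space_def by (rule measurable_restrict) simp

lemma distr_shrink_chain_prefix:
  "0 \<le> t \<Longrightarrow> distr (stream_space noise) (path_space n) (\<lambda>\<omega>. \<lambda>i\<in>{..n}. shrink_chain t \<omega> i) = fdd shrink_kernel t n"
proof (induction n arbitrary: t)
  case 0
  interpret prob_space "stream_space noise"
    by (rule prob_space.prob_space_stream_space[OF prob_space_noise])
  have eq: "(\<lambda>\<omega>. \<lambda>i\<in>{..0::nat}. shrink_chain t \<omega> i) = (\<lambda>\<omega>. \<lambda>i\<in>{..0}. t)" by (auto simp: fun_eq_iff)
  have "(\<lambda>i\<in>{..0::nat}. t) \<in> space (path_space 0)" using 0 by (simp add: space_path_space)
  then show ?case unfolding eq fdd_0_return by (rule distr_const)
next
  case (Suc n)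
  note t = Suc.prems
  interpret prob_space noise by (rule prob_space_noise)
  have shrink_nonneg: "0 \<le> shrink t w" for w by (simp add: shrink_def)
  have prefix_Stream: "(\<lambda>i\<in>{..Suc n}. shrink_chain t (w ## \<omega>) i)
      = cons_path n t (\<lambda>i\<in>{..n}. shrink_chain (shrink t w) \<omega> i)" for w \<omega>
    by (auto simp: fun_eq_iff cons_path_def shrink_chain_Stream[symmetric] simp del: shrink_chain.simps(2)
        split: nat.split)
  have "distr (stream_space noise) (path_space (Suc n)) (\<lambda>\<omega>. \<lambda>i\<in>{..Suc n}. shrink_chain t \<omega> i)
      = noise \<bind> (\<lambda>w. distr (stream_space noise) (path_space (Suc n))
          (cons_path n t \<circ> (\<lambda>\<omega>. \<lambda>i\<in>{..n}. shrink_chain (shrink t w) \<omega> i)))"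
    by (subst distr_stream_space_Stream[OF measurable_shrink_chain_prefix[OF t]]) (simp add: prefix_Stream comp_def)
  also have "\<dots> = noise \<bind> (\<lambda>w. distr (fdd shrink_kernel (shrink t w) n) (path_space (Suc n)) (cons_path n t))"
    by (intro bind_cong refl)
       (simp add: distr_distr[symmetric, OF measurable_cons_path[OF t] measurable_shrink_chain_prefix]
         shrink_nonneg Suc.IH)
  also have "\<dots> = distr noise S (shrink t) \<bind> (\<lambda>s. distr (fdd shrink_kernel s n) (path_space (Suc n)) (cons_path n t))"
    by (rule bind_distr[symmetric, OF measurable_shrink_right _ not_empty])
       (rule measurable_prob_algebraD[OF measurable_compose[OF shrink.measurable_fdd
           measurable_distr_prob_space[OF measurable_cons_path[OF t]]]])
  also have "\<dots> = fdd shrink_kernel t (Suc n)"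
    unfolding shrink_kernel_def[of t, symmetric] by (rule shrink.fdd_Suc_first_step[OF t, symmetric])
  finally show ?case .
qed

lemma chain_law_shrink_chain_law: "0 \<le> t \<Longrightarrow> chain_law shrink_kernel t (shrink_chain_law t)"
proof -
  assume t: "0 \<le> t"
  have meas: "(\<lambda>\<omega>. to_stream (shrink_chain t \<omega>)) \<in> stream_space noise \<rightarrow>\<^sub>M stream_space S"
    using t by (intro measurable_stream_space2) (simp add: to_stream_def)
  have "(\<lambda>\<omega>. \<lambda>i\<in>{..n}. \<omega> !! i) \<circ> (\<lambda>\<omega>. to_stream (shrink_chain t \<omega>)) = (\<lambda>\<omega>. \<lambda>i\<in>{..n}. shrink_chain t \<omega> i)" for n
    by (simp add: fun_eq_iff to_stream_def restrict_def)
  then have "distr (shrink_chain_law t) (path_space n) (\<lambda>\<omega>. \<lambda>i\<in>{..n}. \<omega> !! i) = fdd shrink_kernel t n" for n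
    unfolding shrink_chain_law_def
    by (simp add: distr_distr[OF measurable_path_prefix meas] distr_shrink_chain_prefix[OF t])
  moreover have "prob_space (shrink_chain_law t)"
    unfolding shrink_chain_law_def
    by (intro prob_space.prob_space_distr prob_space.prob_space_stream_space prob_space_noise meas)
  ultimately show ?thesis unfolding chain_law_def by (simp add: shrink_chain_law_def path_space_def)
qed

lemma shrink_exit_prob_eq_q_fun: "0 < t \<Longrightarrow> shrink.exit_prob j t = ennreal (q_fun j t)"
proof (induction j arbitrary: t)
  case 0
  then show ?case by (simp add: shrink.exit_prob_0 emeasure_shrink_kernel_0)
next
  case (Suc j)
  then show ?case
    by (simp add: shrink.exit_prob_Suc_eq_q_fun_integral nn_integral_shrink_kernel_q_fun)
qed

lemma measure_shrink_chain_law_visits_eq: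
  assumes "0 < t"
  shows "measure (shrink_chain_law t) (visits_eq t j) = q_fun j t"
proof -
  have "emeasure (shrink_chain_law t) (visits_eq t j) = ennreal (q_fun j t)"
    using assms chain_law_shrink_chain_law[of t]
    by (simp add: shrink.emeasure_visits_eq shrink_exit_prob_eq_q_fun)
  then show ?thesis by (simp add: measure_def q_fun_nonneg)
qed

section \<open>Inverting the Stirling transform\<close>

lemma ennreal_suminf_swap: "(\<Sum>m. \<Sum>n. f m n :: ennreal) = (\<Sum>n. \<Sum>m. f m n)"
proof -
  interpret pair_sigma_finite "count_space (UNIV::nat set)" "count_space (UNIV::nat set)"
    by (intro pair_sigma_finite.intro sigma_finite_measure_count_space_countable) auto
  have m: "(\<lambda>(x, y). f x y) \<in> borel_measurable (count_space UNIV \<Otimes>\<^sub>M count_space UNIV)"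
    by (subst pair_measure_countable) auto
  have "(\<Sum>m. \<Sum>n. f m n) = (\<integral>\<^sup>+m. \<integral>\<^sup>+n. f m n \<partial>count_space UNIV \<partial>count_space UNIV)"
    by (simp add: nn_integral_count_space_nat)
  also have "\<dots> = (\<integral>\<^sup>+n. \<integral>\<^sup>+m. f m n \<partial>count_space UNIV \<partial>count_space UNIV)"
    by (rule Fubini'[OF m, symmetric])
  also have "\<dots> = (\<Sum>n. \<Sum>m. f m n)"
    by (simp add: nn_integral_count_space_nat)
  finally show ?thesis .
qed

lemma pochhammer_of_nat_nonneg: "0 \<le> pochhammer (real n) k"
  unfolding pochhammer_prod by (intro prod_nonneg) auto

lemma pochhammer_of_nat_le: "pochhammer (real n) k \<le> real n ^ k * fact k"
proof (cases "n = 0")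
  case True
  then show ?thesis by (simp add: pochhammer_0_left)
next
  case False
  then show ?thesis
proof (induction k)
  case (Suc k)
  have "real k * 1 \<le> real k * real n" using Suc.prems by (intro mult_left_mono) auto
  then have "real n + real k \<le> real n * (real k + 1)" by (simp add: algebra_simps)
  then have "pochhammer (real n) k * (real n + real k) \<le> (real n ^ k * fact k) * (real n * (real k + 1))"
    using Suc by (intro mult_mono) (auto simp: pochhammer_of_nat_nonneg)
  then show ?case by (simp add: pochhammer_Suc algebra_simps)
qed simp
qed

lemma suminf_weighted_stirling_transform:
  assumes w: "\<And>j. 0 \<le> w j" and X: "\<And>k. 0 \<le> X k"
  shows "(\<Sum>j. ennreal (w j) * (\<Sum>k. ennreal (stirling_weight j k * X k)))
    = (\<Sum>k. ennreal (X k * (\<Sum>j\<le>k. w j * stirling_weight j k)))"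
proof -
  have "(\<Sum>j. ennreal (w j) * (\<Sum>k. ennreal (stirling_weight j k * X k)))
      = (\<Sum>j. \<Sum>k. ennreal (w j * stirling_weight j k * X k))"
    using w by (simp add: ennreal_suminf_cmult[symmetric] ennreal_mult'[symmetric] mult.assoc)
  also have "\<dots> = (\<Sum>k. \<Sum>j. ennreal (w j * stirling_weight j k * X k))"
    by (rule ennreal_suminf_swap)
  also have "\<dots> = (\<Sum>k. ennreal (X k * (\<Sum>j\<le>k. w j * stirling_weight j k)))"
  proof (rule suminf_cong)
    fix k
    have "(\<Sum>j. ennreal (w j * stirling_weight j k * X k)) = (\<Sum>j\<le>k. ennreal (w j * stirling_weight j k * X k))"
      by (rule suminf_finite) (auto simp: stirling_weight_eq_0)
    also have "\<dots> = ennreal (X k * (\<Sum>j\<le>k. w j * stirling_weight j k))"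
      using w X by (subst sum_ennreal) (auto simp: stirling_weight_nonneg sum_distrib_left ac_simps)
    finally show "(\<Sum>j. ennreal (w j * stirling_weight j k * X k)) = ennreal (X k * (\<Sum>j\<le>k. w j * stirling_weight j k))" .
  qed
  finally show ?thesis .
qed

lemma summable_mult_pochhammer_bounded:
  fixes X c :: "nat \<Rightarrow> real"
  assumes t: "0 \<le> t" and X: "\<And>k. 0 \<le> X k" "\<And>k. X k \<le> t ^ k / fact k"
    and c: "\<And>k. 0 \<le> c k" "\<And>k. c k \<le> pochhammer (real n) k / fact k"
  shows "summable (\<lambda>k. X k * c k)"
proof (rule summable_comparison_test')
  show "summable (\<lambda>k. inverse (fact k) * (real n * t) ^ k)" by (rule summable_exp)
  fix k
  have "c k \<le> real n ^ k * fact k / fact k"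
    using c(2)[of k] pochhammer_of_nat_le[of n k] by (meson divide_right_mono fact_ge_zero order_trans)
  then have "X k * c k \<le> (t ^ k / fact k) * real n ^ k"
    using X[of k] c(1)[of k] t by (intro mult_mono) auto
  then show "norm (X k * c k) \<le> inverse (fact k) * (real n * t) ^ k"
    using X(1)[of k] c(1)[of k] by (simp add: power_mult_distrib field_simps)
qed

lemma stirling_transform_eq_weighted:
  fixes A B w :: "nat \<Rightarrow> real"
  assumes t: "0 \<le> t"
    and A: "\<And>k. 0 \<le> A k" "\<And>k. A k \<le> t ^ k / fact k"
    and B: "\<And>k. 0 \<le> B k" "\<And>k. B k \<le> t ^ k / fact k"
    and eq: "\<And>j. (\<Sum>k. ennreal (stirling_weight j k * A k)) = (\<Sum>k. ennreal (stirling_weight j k * B k))"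
    and w: "\<And>j. 0 \<le> w j"
    and c_le: "\<And>k. (\<Sum>j\<le>k. w j * stirling_weight j k) \<le> pochhammer (real n) k / fact k"
  shows "(\<Sum>k. A k * (\<Sum>j\<le>k. w j * stirling_weight j k)) = (\<Sum>k. B k * (\<Sum>j\<le>k. w j * stirling_weight j k))"
proof -
  define c where "c k = (\<Sum>j\<le>k. w j * stirling_weight j k)" for k
  have c: "0 \<le> c k" for k unfolding c_def using w by (intro sum_nonneg) (simp add: stirling_weight_nonneg)
  have summable: "summable (\<lambda>k. X k * c k)" if "\<And>k. 0 \<le> X k" "\<And>k. X k \<le> t ^ k / fact k" for X
    by (rule summable_mult_pochhammer_bounded[OF t that c]) (use c_le in \<open>simp add: c_def\<close>)
  have "ennreal (\<Sum>k. X k * c k) = (\<Sum>j. ennreal (w j) * (\<Sum>k. ennreal (stirling_weight j k * X k)))"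
    if X: "\<And>k. 0 \<le> X k" "\<And>k. X k \<le> t ^ k / fact k" for X :: "nat \<Rightarrow> real"
  proof -
    have "ennreal (\<Sum>k. X k * c k) = (\<Sum>k. ennreal (X k * c k))"
      by (rule suminf_ennreal2[symmetric]) (use X(1) c summable[OF X] in auto)
    then show ?thesis by (simp add: suminf_weighted_stirling_transform[OF w X(1)] c_def)
  qed
  from this[OF A] this[OF B] have "ennreal (\<Sum>k. A k * c k) = ennreal (\<Sum>k. B k * c k)"
    by (simp add: eq)
  moreover have "0 \<le> (\<Sum>k. X k * c k)" if "\<And>k. 0 \<le> X k" "\<And>k. X k \<le> t ^ k / fact k" for X
    using that(1) c by (intro suminf_nonneg summable[OF that]) simp
  ultimately show ?thesis using A B unfolding c_def by simp
qed

text \<open>The Stirling transform is inverted by evaluating its generating function at \<open>- n\<close>,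
  where \<open>pochhammer (- n) k\<close> vanishes for \<open>k > n\<close>; the alternating signs are handled by
  splitting \<open>(- n) ^ j\<close> into its even and odd part.\<close>

lemma stirling_transform_eq_imp_pochhammer_sum_eq:
  fixes A B :: "nat \<Rightarrow> real"
  assumes t: "0 \<le> t"
    and A: "\<And>k. 0 \<le> A k" "\<And>k. A k \<le> t ^ k / fact k"
    and B: "\<And>k. 0 \<le> B k" "\<And>k. B k \<le> t ^ k / fact k"
    and eq: "\<And>j. (\<Sum>k. ennreal (stirling_weight j k * A k)) = (\<Sum>k. ennreal (stirling_weight j k * B k))"
  shows "(\<Sum>k\<le>n. A k * (pochhammer (- real n) k / fact k)) = (\<Sum>k\<le>n. B k * (pochhammer (- real n) k / fact k))"
proof -
  define even_part where "even_part k = (\<Sum>j\<le>k. (if even j then real n ^ j else 0) * stirling_weight j k)" for k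
  define odd_part where "odd_part k = (\<Sum>j\<le>k. (if odd j then real n ^ j else 0) * stirling_weight j k)" for k
  have parts_nonneg: "0 \<le> even_part k" "0 \<le> odd_part k" for k
    unfolding even_part_def odd_part_def by (auto intro!: sum_nonneg simp: stirling_weight_nonneg)
  have "even_part k + odd_part k = (\<Sum>j\<le>k. stirling_weight j k * real n ^ j)" for k
    unfolding even_part_def odd_part_def sum.distrib[symmetric] by (intro sum.cong) auto
  then have "even_part k + odd_part k = pochhammer (real n) k / fact k" for k
    by (simp add: sum_stirling_weight_power)
  then have parts_le: "even_part k \<le> pochhammer (real n) k / fact k" "odd_part k \<le> pochhammer (real n) k / fact k" for k
    using parts_nonneg[of k] by (metis le_add_same_cancel1 le_add_same_cancel2)+
  have "even_part k - odd_part k = (\<Sum>j\<le>k. stirling_weight j k * (- real n) ^ j)" for k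
    unfolding even_part_def odd_part_def sum_subtractf[symmetric] by (intro sum.cong) (auto simp: power_minus')
  then have parts_diff: "even_part k - odd_part k = pochhammer (- real n) k / fact k" for k
    by (simp add: sum_stirling_weight_power)
  have summable: "summable (\<lambda>k. X k * even_part k)" "summable (\<lambda>k. X k * odd_part k)"
    if "\<And>k. 0 \<le> X k" "\<And>k. X k \<le> t ^ k / fact k" for X
    using summable_mult_pochhammer_bounded[OF t that parts_nonneg(1) parts_le(1)]
      summable_mult_pochhammer_bounded[OF t that parts_nonneg(2) parts_le(2)] by auto
  have "(\<Sum>k. A k * (pochhammer (- real n) k / fact k)) = (\<Sum>k. B k * (pochhammer (- real n) k / fact k))"
    using stirling_transform_eq_weighted[OF t A B eq _ parts_le(1)[unfolded even_part_def]]
      stirling_transform_eq_weighted[OF t A B eq _ parts_le(2)[unfolded odd_part_def]]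
    by (simp add: parts_diff[symmetric] right_diff_distrib suminf_diff[symmetric] summable[OF A] summable[OF B])
       (simp add: even_part_def odd_part_def)
  moreover have "(\<Sum>k. X k * (pochhammer (- real n) k / fact k)) = (\<Sum>k\<le>n. X k * (pochhammer (- real n) k / fact k))"
    for X :: "nat \<Rightarrow> real"
    by (rule suminf_finite) (auto simp: pochhammer_of_nat_eq_0_iff)
  ultimately show ?thesis by simp
qed

lemma stirling_transform_inj:
  fixes A B :: "nat \<Rightarrow> real"
  assumes t: "0 \<le> t"
    and A: "\<And>k. 0 \<le> A k" "\<And>k. A k \<le> t ^ k / fact k"
    and B: "\<And>k. 0 \<le> B k" "\<And>k. B k \<le> t ^ k / fact k"
    and eq: "\<And>j. (\<Sum>k. ennreal (stirling_weight j k * A k)) = (\<Sum>k. ennreal (stirling_weight j k * B k))"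
  shows "A = B"
proof -
  have "A n = B n" for n
  proof (induction n rule: less_induct)
    case (less n)
    then have "(\<Sum>k<n. A k * (pochhammer (- real n) k / fact k)) = (\<Sum>k<n. B k * (pochhammer (- real n) k / fact k))"
      by simp
    with stirling_transform_eq_imp_pochhammer_sum_eq[OF t A B eq, of n]
    have "A n * (pochhammer (- real n) n / fact n) = B n * (pochhammer (- real n) n / fact n)"
      by (simp add: lessThan_Suc_atMost[symmetric])
    moreover have "pochhammer (- real n) n \<noteq> 0" by (simp add: pochhammer_of_nat_eq_0_iff)
    ultimately show ?case by simp
  qed
  then show ?thesis by auto
qed

section \<open>Laws on \<open>[0, t)\<close> with equal \<open>q_fun\<close> integrals\<close>

text \<open>\<open>gamma_cdf k\<close> is the distribution function of the Gamma distribution with shape \<open>k + 1\<close>.\<close>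

definition gamma_cdf :: "nat \<Rightarrow> real \<Rightarrow> real" where
  "gamma_cdf k x = 1 - exp (- x) * (\<Sum>i\<le>k. x ^ i / fact i)"

definition gamma_cdf_ratio :: "nat \<Rightarrow> real \<Rightarrow> real" where
  "gamma_cdf_ratio k x = gamma_cdf k x / x"

lemma gamma_cdf_0: "gamma_cdf k 0 = 0"
proof -
  have "(\<Sum>i\<le>k. 0 ^ i / fact i :: real) = 1" by (induction k) auto
  then show ?thesis by (simp add: gamma_cdf_def)
qed

lemma gamma_cdf_has_derivative: "(gamma_cdf k has_real_derivative exp (- x) * x ^ k / fact k) (at x)"
proof (induction k)
  case 0
  have "gamma_cdf 0 = (\<lambda>x. 1 - exp (- x))" by (auto simp: fun_eq_iff gamma_cdf_def)
  then show ?case by (auto intro!: derivative_eq_intros)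
next
  case (Suc k)
  have "gamma_cdf (Suc k) = (\<lambda>x. gamma_cdf k x - exp (- x) * (x ^ Suc k / fact (Suc k)))"
    by (auto simp: fun_eq_iff gamma_cdf_def algebra_simps)
  moreover have "((\<lambda>x. x ^ Suc k / fact (Suc k)) has_real_derivative x ^ k / fact k) (at x)"
    using DERIV_cdivide[OF DERIV_pow[of "Suc k" x], of "fact (Suc k)"] by (simp del: of_nat_Suc)
  then have "((\<lambda>x. gamma_cdf k x - exp (- x) * (x ^ Suc k / fact (Suc k))) has_real_derivative
      exp (- x) * x ^ k / fact k - (- exp (- x) * (x ^ Suc k / fact (Suc k)) + x ^ k / fact k * exp (- x))) (at x)"
    by (intro DERIV_diff Suc DERIV_mult) (auto intro!: derivative_eq_intros)
  ultimately show ?case by (simp add: algebra_simps)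
qed

lemma gamma_cdf_has_integral:
  assumes "0 \<le> x"
  shows "((\<lambda>u. exp (- u) * u ^ k / fact k) has_integral gamma_cdf k x) {0..x}"
proof -
  have "((\<lambda>u. exp (- u) * u ^ k / fact k) has_integral (gamma_cdf k x - gamma_cdf k 0)) {0..x}"
    by (rule fundamental_theorem_of_calculus)
       (use assms in \<open>auto intro: gamma_cdf_has_derivative[THEN has_field_derivative_at_within]
          simp: has_real_derivative_iff_has_vector_derivative[symmetric]\<close>)
  then show ?thesis by (simp add: gamma_cdf_0)
qed

lemma power_div_fact_has_integral:
  fixes x :: real
  assumes "0 \<le> x"
  shows "((\<lambda>u. u ^ k / fact k) has_integral x ^ Suc k / fact (Suc k)) {0..x}"
proof -
  have "((\<lambda>u. u ^ k / fact k) has_integral x ^ Suc k / fact (Suc k) - 0 ^ Suc k / fact (Suc k)) {0..x}"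
  proof (rule fundamental_theorem_of_calculus[where a=0 and b=x and f="\<lambda>u. u ^ Suc k / fact (Suc k)"
        and f'="\<lambda>u. u ^ k / fact k"])
    fix u :: real
    have "((\<lambda>u. u ^ Suc k / fact (Suc k)) has_real_derivative real (Suc k) * u ^ k / fact (Suc k)) (at u)"
      using DERIV_cdivide[OF DERIV_pow[of "Suc k" u], of "fact (Suc k)"] by simp
    also have "real (Suc k) * u ^ k / fact (Suc k) = u ^ k / fact k"
      by (simp del: of_nat_Suc)
    finally show "((\<lambda>u. u ^ Suc k / fact (Suc k)) has_vector_derivative u ^ k / fact k) (at u within {0..x})"
      by (simp add: has_real_derivative_iff_has_vector_derivative[symmetric] has_field_derivative_at_within)
  qed (rule assms)
  then show ?thesis by simp
qed

lemma gamma_cdf_nonneg: "0 \<le> x \<Longrightarrow> 0 \<le> gamma_cdf k x"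
  by (rule has_integral_nonneg[OF gamma_cdf_has_integral]) auto

lemma gamma_cdf_le: "0 \<le> x \<Longrightarrow> gamma_cdf k x \<le> x ^ Suc k / fact (Suc k)"
proof (rule has_integral_le[OF gamma_cdf_has_integral power_div_fact_has_integral])
  fix u assume "u \<in> {0..x}"
  then have "exp (- u) \<le> 1" "0 \<le> u ^ k / fact k" by auto
  then show "exp (- u) * u ^ k / fact k \<le> u ^ k / fact k"
    using mult_right_mono[of "exp (- u)" 1 "u ^ k / fact k"] by simp
qed

lemma measurable_gamma_cdf_ratio[measurable]: "gamma_cdf_ratio k \<in> borel_measurable borel"
proof -
  have "gamma_cdf k \<in> borel_measurable borel"
    unfolding gamma_cdf_def by (intro borel_measurable_continuous_onI continuous_intros) auto
  then show ?thesis unfolding gamma_cdf_ratio_def[abs_def] by measurable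
qed

lemma gamma_cdf_ratio_bounds:
  assumes "0 < x" "x \<le> t"
  shows "0 \<le> gamma_cdf_ratio k x" and "gamma_cdf_ratio k x \<le> t ^ k / fact k"
proof -
  show "0 \<le> gamma_cdf_ratio k x" using assms by (simp add: gamma_cdf_ratio_def gamma_cdf_nonneg)
  have "gamma_cdf_ratio k x \<le> (x ^ Suc k / fact (Suc k)) / x"
    unfolding gamma_cdf_ratio_def using gamma_cdf_le[of x k] assms by (intro divide_right_mono) auto
  also have "\<dots> = x ^ k / fact (Suc k)" using assms by simp
  also have "\<dots> \<le> x ^ k / fact k" using assms by (intro divide_left_mono) (auto simp: fact_mono)
  also have "\<dots> \<le> t ^ k / fact k" using assms by (intro divide_right_mono power_mono) auto
  finally show "gamma_cdf_ratio k x \<le> t ^ k / fact k" .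
qed

lemma has_integral_suminf_nonneg:
  fixes c G :: "nat \<Rightarrow> real" and g :: "nat \<Rightarrow> real \<Rightarrow> real"
  assumes c: "\<And>k. 0 \<le> c k" and g: "\<And>k u. u \<in> {0..x} \<Longrightarrow> 0 \<le> g k u"
    and g_meas[measurable]: "\<And>k. g k \<in> borel_measurable borel"
    and sums: "\<And>u. u \<in> {0..x} \<Longrightarrow> (\<lambda>k. c k * g k u) sums f u"
    and G: "\<And>k. (g k has_integral G k) {0..x}"
    and F: "(f has_integral F) {0..x}"
  shows "ennreal F = (\<Sum>k. ennreal (c k * G k))"
proof -
  have f: "0 \<le> f u" if "u \<in> {0..x}" for u
    using sums_le[OF _ sums_zero sums[OF that]] c g[OF that] by simp
  have "ennreal F = (\<integral>\<^sup>+u. ennreal (indicator {0..x} u * f u) \<partial>lborel)"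
    by (rule nn_integral_has_integral_lebesgue[symmetric, OF f F])
  also have "\<dots> = (\<integral>\<^sup>+u. (\<Sum>k. ennreal (c k) * ennreal (indicator {0..x} u * g k u)) \<partial>lborel)"
  proof (rule nn_integral_cong)
    fix u
    show "ennreal (indicator {0..x} u * f u) = (\<Sum>k. ennreal (c k) * ennreal (indicator {0..x} u * g k u))"
    proof (cases "u \<in> {0..x}")
      case True
      then have "(\<Sum>k. ennreal (c k) * ennreal (indicator {0..x} u * g k u)) = ennreal (\<Sum>k. c k * g k u)"
        using c g sums by (simp add: ennreal_mult'[symmetric] suminf_ennreal2 sums_iff)
      with True sums[OF True] show ?thesis by (simp add: sums_iff)
    qed simp
  qed
  also have "\<dots> = (\<Sum>k. ennreal (c k) * (\<integral>\<^sup>+u. ennreal (indicator {0..x} u * g k u) \<partial>lborel))"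
    by (simp add: nn_integral_suminf nn_integral_cmult)
  also have "\<dots> = (\<Sum>k. ennreal (c k * G k))"
    using nn_integral_has_integral_lebesgue[OF g G] c by (simp add: ennreal_mult')
  finally show ?thesis .
qed

lemma ennreal_q_fun_expansion:
  assumes "0 < x"
  shows "ennreal (q_fun j x) = (\<Sum>k. ennreal (stirling_weight j k * gamma_cdf_ratio k x))"
proof -
  have "(\<lambda>k. stirling_weight j k * (exp (- u) * u ^ k / fact k)) sums p_fun j u" for u
  proof -
    have "(\<lambda>k. exp (- u) * (p_coeff j k * u ^ k)) sums (exp (- u) * p_series j u)"
      unfolding p_series_def by (intro sums_mult summable_sums summable_p_coeff)
    then show ?thesis by (simp add: p_fun_eq p_coeff_def field_simps)
  qed
  moreover have "(p_fun j has_integral integral {0..x} (p_fun j)) {0..x}"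
    by (intro integrable_integral integrable_continuous_interval continuous_on_p_fun)
  ultimately have "ennreal (integral {0..x} (p_fun j)) = (\<Sum>k. ennreal (stirling_weight j k * gamma_cdf k x))"
    using assms
    by (intro has_integral_suminf_nonneg[OF stirling_weight_nonneg _ _ _ gamma_cdf_has_integral])
       (auto intro: borel_measurable_continuous_onI continuous_intros)
  then have "ennreal (1 / x) * ennreal (integral {0..x} (p_fun j))
      = (\<Sum>k. ennreal (1 / x) * ennreal (stirling_weight j k * gamma_cdf k x))"
    by (simp add: ennreal_suminf_cmult)
  with assms show ?thesis
    by (simp add: q_fun_def gamma_cdf_ratio_def ennreal_mult'[symmetric])
qed

lemma ennreal_power_expansion:
  assumes "0 < x"
  shows "ennreal (x ^ m / (m + 1)) = (\<Sum>l. ennreal (fact (m + l) / fact l * gamma_cdf_ratio (m + l) x))"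
proof -
  have "(\<lambda>l. fact (m + l) / fact l * (exp (- u) * u ^ (m + l) / fact (m + l))) sums u ^ m" for u :: real
  proof -
    have "(\<lambda>l. exp (- u) * u ^ m * (u ^ l /\<^sub>R fact l)) sums (exp (- u) * u ^ m * exp u)"
      by (intro sums_mult exp_converges)
    moreover have "exp (- u) * u ^ m * exp u = u ^ m" by (simp add: exp_minus)
    moreover have "exp (- u) * u ^ m * (u ^ l /\<^sub>R fact l)
        = fact (m + l) / fact l * (exp (- u) * u ^ (m + l) / fact (m + l))" for l
      by (simp add: power_add field_simps)
    ultimately show ?thesis by simp
  qed
  moreover have "((\<lambda>u. u ^ m) has_integral x * (x ^ m / (m + 1))) {0..x}"
    using has_integral_mult_left[OF power_div_fact_has_integral[of x m], of "fact m"] assms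
    by (simp add: field_simps del: of_nat_Suc)
  ultimately have "ennreal (x * (x ^ m / (m + 1))) = (\<Sum>l. ennreal (fact (m + l) / fact l * gamma_cdf (m + l) x))"
    using assms
    by (intro has_integral_suminf_nonneg[OF _ _ _ _ gamma_cdf_has_integral])
       (auto intro: borel_measurable_continuous_onI continuous_intros)
  then have "ennreal (1 / x) * ennreal (x * (x ^ m / (m + 1)))
      = (\<Sum>l. ennreal (1 / x) * ennreal (fact (m + l) / fact l * gamma_cdf (m + l) x))"
    by (simp add: ennreal_suminf_cmult)
  with assms show ?thesis
    by (simp add: gamma_cdf_ratio_def ennreal_mult'[symmetric] mult.commute add.commute)
qed

locale law_below = prob_space \<gamma> for \<gamma> :: "real measure" +
  fixes t :: real
  assumes pos: "0 < t" and sets_eq: "sets \<gamma> = sets S" and below: "measure \<gamma> {0..<t} = 1"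
begin

lemma measurable_id_borel[measurable]: "(\<lambda>x. x) \<in> \<gamma> \<rightarrow>\<^sub>M borel"
  by (rule measurable_sets_eq_left[OF sets_eq measurable_S_borel])

lemma AE_below: "AE x in \<gamma>. 0 \<le> x \<and> x < t"
proof -
  have "{0..<t} \<in> events" using sets_eq pos by (auto simp: sets_S_iff)
  with below have "AE x in \<gamma>. x \<in> {0..<t}" by (intro AE_prob_1) auto
  then show ?thesis by auto
qed

definition ratio_moment :: "nat \<Rightarrow> ennreal" where
  "ratio_moment k = (\<integral>\<^sup>+x. ennreal (indicator {0<..<t} x * gamma_cdf_ratio k x) \<partial>\<gamma>)"

lemma ratio_moment_le: "ratio_moment k \<le> ennreal (t ^ k / fact k)"
proof -
  have "ratio_moment k \<le> (\<integral>\<^sup>+x. ennreal (t ^ k / fact k) \<partial>\<gamma>)"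
    unfolding ratio_moment_def
    by (intro nn_integral_mono) (auto simp: indicator_def gamma_cdf_ratio_bounds)
  then show ?thesis by (simp add: emeasure_space_1)
qed

lemma ennreal_enn2real_ratio_moment: "ennreal (enn2real (ratio_moment k)) = ratio_moment k"
  using le_less_trans[OF ratio_moment_le ennreal_less_top] by simp

lemma enn2real_ratio_moment_le: "enn2real (ratio_moment k) \<le> t ^ k / fact k"
  using pos by (intro enn2real_leI ratio_moment_le) simp

lemma nn_integral_q_fun:
  "(\<integral>\<^sup>+x. ennreal (indicator {0<..<t} x * q_fun j x) \<partial>\<gamma>) = (\<Sum>k. ennreal (stirling_weight j k) * ratio_moment k)"
proof -
  have "(\<integral>\<^sup>+x. ennreal (indicator {0<..<t} x * q_fun j x) \<partial>\<gamma>)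
      = (\<integral>\<^sup>+x. (\<Sum>k. ennreal (stirling_weight j k) * ennreal (indicator {0<..<t} x * gamma_cdf_ratio k x)) \<partial>\<gamma>)"
    by (intro nn_integral_cong)
       (auto simp: indicator_def ennreal_q_fun_expansion ennreal_mult'[OF stirling_weight_nonneg])
  also have "\<dots> = (\<Sum>k. ennreal (stirling_weight j k) * ratio_moment k)"
    unfolding ratio_moment_def by (simp add: nn_integral_suminf nn_integral_cmult)
  finally show ?thesis .
qed

lemma nn_integral_power_interior:
  "(\<integral>\<^sup>+x. ennreal (indicator {0<..<t} x * x ^ m) \<partial>\<gamma>)
    = ennreal (real m + 1) * (\<Sum>l. ennreal (fact (m + l) / fact l) * ratio_moment (m + l))"
proof -
  have "ennreal (indicator {0<..<t} x * x ^ m) = ennreal (real m + 1) *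
      (\<Sum>l. ennreal (fact (m + l) / fact l) * ennreal (indicator {0<..<t} x * gamma_cdf_ratio (m + l) x))" for x
  proof (cases "x \<in> {0<..<t}")
    case True
    then have "ennreal (indicator {0<..<t} x * x ^ m) = ennreal ((real m + 1) * (x ^ m / (real m + 1)))"
      by simp
    also have "\<dots> = ennreal (real m + 1) * ennreal (x ^ m / (real m + 1))"
      using True by (intro ennreal_mult) auto
    finally show ?thesis
      using True by (simp add: ennreal_power_expansion ennreal_mult'[symmetric])
  qed simp
  then have "(\<integral>\<^sup>+x. ennreal (indicator {0<..<t} x * x ^ m) \<partial>\<gamma>) = ennreal (real m + 1) *
      (\<integral>\<^sup>+x. (\<Sum>l. ennreal (fact (m + l) / fact l) * ennreal (indicator {0<..<t} x * gamma_cdf_ratio (m + l) x)) \<partial>\<gamma>)"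
    by (simp add: nn_integral_cmult)
  also have "\<dots> = ennreal (real m + 1) * (\<Sum>l. ennreal (fact (m + l) / fact l) * ratio_moment (m + l))"
    unfolding ratio_moment_def by (simp add: nn_integral_suminf nn_integral_cmult)
  finally show ?thesis .
qed

lemma nn_integral_power:
  "(\<integral>\<^sup>+x. ennreal (x ^ m) \<partial>\<gamma>)
    = (\<integral>\<^sup>+x. ennreal (indicator {0<..<t} x * x ^ m) \<partial>\<gamma>) + ennreal (0 ^ m) * emeasure \<gamma> {0}"
proof -
  have zero: "{0::real} \<in> sets \<gamma>" using sets_eq by (simp add: sets_S_iff)
  have "(\<integral>\<^sup>+x. ennreal (x ^ m) \<partial>\<gamma>)
      = (\<integral>\<^sup>+x. ennreal (indicator {0<..<t} x * x ^ m) + ennreal (0 ^ m) * indicator {0} x \<partial>\<gamma>)"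
    by (rule nn_integral_cong_AE) (use AE_below in \<open>eventually_elim, auto simp: indicator_def\<close>)
  also have "\<dots> = (\<integral>\<^sup>+x. ennreal (indicator {0<..<t} x * x ^ m) \<partial>\<gamma>) + ennreal (0 ^ m) * emeasure \<gamma> {0}"
    using zero by (subst nn_integral_add) (auto simp: nn_integral_cmult_indicator)
  finally show ?thesis .
qed

lemma char_eq_suminf_integral:
  "char (distr \<gamma> borel (\<lambda>x. x)) u = (\<Sum>m. CLINT x|\<gamma>. (\<i> * complex_of_real (u * x)) ^ m /\<^sub>R fact m)"
proof -
  define f where "f m x = (\<i> * complex_of_real (u * x)) ^ m /\<^sub>R fact m" for m x
  have f_meas[measurable]: "f m \<in> borel_measurable \<gamma>" for m
    unfolding f_def by measurable
  have f_bound: "AE x in \<gamma>. norm (f m x) \<le> (\<bar>u\<bar> * t) ^ m / fact m" for m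
    using AE_below
  proof eventually_elim
    case (elim x)
    then have "(\<bar>u\<bar> * \<bar>x\<bar>) ^ m / fact m \<le> (\<bar>u\<bar> * t) ^ m / fact m"
      by (intro divide_right_mono power_mono mult_left_mono) auto
    then show ?case by (simp add: f_def norm_mult norm_power abs_mult field_simps)
  qed
  have f_int: "integrable \<gamma> (f m)" for m by (rule integrable_const_bound[OF f_bound f_meas])
  have "char (distr \<gamma> borel (\<lambda>x. x)) u = (CLINT x|\<gamma>. (\<Sum>m. f m x))"
    unfolding char_def using exp_converges[of "\<i> * complex_of_real (u * _)"]
    by (subst integral_distr) (auto simp: f_def sums_iff)
  also have "\<dots> = (\<Sum>m. CLINT x|\<gamma>. f m x)"
  proof (rule integral_suminf[OF f_int])
    show "AE x in \<gamma>. summable (\<lambda>m. norm (f m x))"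
      unfolding f_def by (intro AE_I2 summable_norm_exp)
    show "summable (\<lambda>m. \<integral>x. norm (f m x) \<partial>\<gamma>)"
    proof (rule summable_comparison_test')
      show "summable (\<lambda>m. inverse (fact m) * (\<bar>u\<bar> * t) ^ m)" by (rule summable_exp)
      fix m
      have "(\<integral>x. norm (f m x) \<partial>\<gamma>) \<le> (\<bar>u\<bar> * t) ^ m / fact m"
        by (rule integral_le_const) (use f_int f_bound in auto)
      then show "norm (\<integral>x. norm (f m x) \<partial>\<gamma>) \<le> inverse (fact m) * (\<bar>u\<bar> * t) ^ m"
        by (simp add: divide_inverse mult.commute integral_nonneg_AE)
    qed
  qed
  finally show ?thesis by (simp add: f_def)
qed

lemma char_eq_moment_series:
  "char (distr \<gamma> borel (\<lambda>x. x)) u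
    = (\<Sum>m. ((\<i> * complex_of_real u) ^ m /\<^sub>R fact m) * complex_of_real (enn2real (\<integral>\<^sup>+x. ennreal (x ^ m) \<partial>\<gamma>)))"
  unfolding char_eq_suminf_integral
proof (rule suminf_cong)
  fix m
  have "(\<lambda>x. (\<i> * complex_of_real (u * x)) ^ m /\<^sub>R fact m)
      = (\<lambda>x. ((\<i> * complex_of_real u) ^ m /\<^sub>R fact m) * complex_of_real (x ^ m))"
    by (auto simp: fun_eq_iff power_mult_distrib scaleR_conv_of_real)
  moreover have "(\<integral>x. x ^ m \<partial>\<gamma>) = enn2real (\<integral>\<^sup>+x. ennreal (x ^ m) \<partial>\<gamma>)"
    by (rule integral_eq_nn_integral) (use AE_below in \<open>auto elim: AE_mp\<close>)
  ultimately show "(CLINT x|\<gamma>. (\<i> * complex_of_real (u * x)) ^ m /\<^sub>R fact m)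
      = ((\<i> * complex_of_real u) ^ m /\<^sub>R fact m) * complex_of_real (enn2real (\<integral>\<^sup>+x. ennreal (x ^ m) \<partial>\<gamma>))"
    by (simp del: of_real_power add: integral_complex_of_real[symmetric])
qed

lemma real_distribution_distr: "real_distribution (distr \<gamma> borel (\<lambda>x. x))"
  by (intro real_distribution.intro prob_space_distr measurable_id_borel) (simp add: real_distribution_axioms_def)

end

lemma law_below_eq_if_moments_eq:
  assumes \<alpha>: "law_below \<alpha> t" and \<beta>: "law_below \<beta> t"
    and moments: "\<And>m. (\<integral>\<^sup>+x. ennreal (x ^ m) \<partial>\<alpha>) = (\<integral>\<^sup>+x. ennreal (x ^ m) \<partial>\<beta>)"
  shows "\<alpha> = \<beta>"
proof -
  interpret \<alpha>: law_below \<alpha> t by (rule \<alpha>)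
  interpret \<beta>: law_below \<beta> t by (rule \<beta>)
  have "char (distr \<alpha> borel (\<lambda>x. x)) = char (distr \<beta> borel (\<lambda>x. x))"
    by (simp add: fun_eq_iff \<alpha>.char_eq_moment_series \<beta>.char_eq_moment_series moments)
  then have distr_eq: "distr \<alpha> borel (\<lambda>x. x) = distr \<beta> borel (\<lambda>x. x)"
    by (rule Levy_uniqueness[OF \<alpha>.real_distribution_distr \<beta>.real_distribution_distr])
  show ?thesis
  proof (rule measure_eqI)
    show "sets \<alpha> = sets \<beta>" using \<alpha>.sets_eq \<beta>.sets_eq by simp
    fix A assume "A \<in> sets \<alpha>"
    then have A: "A \<in> sets borel" "A \<subseteq> space \<alpha>" "A \<subseteq> space \<beta>"
      using \<alpha>.sets_eq \<beta>.sets_eq sets.sets_into_space[of A \<alpha>] sets_eq_imp_space_eq[of \<alpha> \<beta>]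
      by (auto simp: sets_S_iff)
    then have "emeasure \<alpha> A = emeasure (distr \<alpha> borel (\<lambda>x. x)) A"
      "emeasure \<beta> A = emeasure (distr \<beta> borel (\<lambda>x. x)) A"
      by (simp_all add: emeasure_distr Int_absorb2)
    with distr_eq show "emeasure \<alpha> A = emeasure \<beta> A" by simp
  qed
qed

lemma law_below_eqI:
  assumes \<alpha>: "law_below \<alpha> t" and \<beta>: "law_below \<beta> t"
    and zero: "measure \<alpha> {0} = measure \<beta> {0}"
    and q_fun: "\<And>j. (\<integral>\<^sup>+x. ennreal (indicator {0<..<t} x * q_fun j x) \<partial>\<alpha>)
      = (\<integral>\<^sup>+x. ennreal (indicator {0<..<t} x * q_fun j x) \<partial>\<beta>)"
  shows "\<alpha> = \<beta>"
proof (rule law_below_eq_if_moments_eq[OF \<alpha> \<beta>])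
  interpret \<alpha>: law_below \<alpha> t by (rule \<alpha>)
  interpret \<beta>: law_below \<beta> t by (rule \<beta>)
  have "(\<lambda>k. enn2real (\<alpha>.ratio_moment k)) = (\<lambda>k. enn2real (\<beta>.ratio_moment k))"
  proof (rule stirling_transform_inj)
    show "0 \<le> t" using \<alpha>.pos by simp
    fix j
    show "(\<Sum>k. ennreal (stirling_weight j k * enn2real (\<alpha>.ratio_moment k)))
        = (\<Sum>k. ennreal (stirling_weight j k * enn2real (\<beta>.ratio_moment k)))"
      using q_fun[of j]
      by (simp add: \<alpha>.nn_integral_q_fun \<beta>.nn_integral_q_fun ennreal_mult'[OF stirling_weight_nonneg]
          \<alpha>.ennreal_enn2real_ratio_moment \<beta>.ennreal_enn2real_ratio_moment)
  qed (simp_all add: \<alpha>.enn2real_ratio_moment_le \<beta>.enn2real_ratio_moment_le)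
  then have "\<alpha>.ratio_moment k = \<beta>.ratio_moment k" for k
    by (metis \<alpha>.ennreal_enn2real_ratio_moment \<beta>.ennreal_enn2real_ratio_moment)
  moreover have "emeasure \<alpha> {0} = emeasure \<beta> {0}"
    using zero by (simp add: \<alpha>.emeasure_eq_measure \<beta>.emeasure_eq_measure)
  ultimately show "(\<integral>\<^sup>+x. ennreal (x ^ m) \<partial>\<alpha>) = (\<integral>\<^sup>+x. ennreal (x ^ m) \<partial>\<beta>)" for m
    by (simp add: \<alpha>.nn_integral_power \<beta>.nn_integral_power
        \<alpha>.nn_integral_power_interior \<beta>.nn_integral_power_interior)
qed

section \<open>Uniqueness\<close>

context decreasing_kernel
begin

lemma law_below_K: "0 < t \<Longrightarrow> law_below (K t) t"
  by (intro law_below.intro law_below_axioms.intro prob_space_K) (simp_all add: sets_K decreasing)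

lemma eq_shrink_kernel_if_visits:
  assumes visits: "\<And>t. 0 < t \<Longrightarrow> \<exists>P. chain_law K t P \<and> (\<forall>j. measure P (visits_eq t j) = q_fun j t)"
    and "0 \<le> t"
  shows "K t = shrink_kernel t"
proof (cases "t = 0")
  case True
  then show ?thesis using K_0 shrink.K_0 by simp
next
  case False
  with \<open>0 \<le> t\<close> have t: "0 < t" by simp
  have exit: "exit_prob j s = ennreal (q_fun j s)" if s: "0 < s" for j s
  proof -
    obtain P where law: "chain_law K s P" and q: "\<forall>j. measure P (visits_eq s j) = q_fun j s"
      using visits[OF s] by blast
    interpret prob_space P using law by (simp add: chain_law_def)
    show ?thesis using emeasure_visits_eq[OF s law] q by (simp add: emeasure_eq_measure)
  qed
  show ?thesis
  proof (rule law_below_eqI[OF law_below_K[OF t] shrink.law_below_K[OF t]])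
    show "measure (K t) {0} = measure (shrink_kernel t) {0}"
      using exit[OF t, of 0] exit_prob_0[OF t] emeasure_shrink_kernel_0[OF t] by (simp add: measure_def)
    show "(\<integral>\<^sup>+x. ennreal (indicator {0<..<t} x * q_fun j x) \<partial>K t)
        = (\<integral>\<^sup>+x. ennreal (indicator {0<..<t} x * q_fun j x) \<partial>shrink_kernel t)" for j
      using exit_prob_Suc_eq_q_fun_integral[OF t exit] exit[OF t, of "Suc j"]
      by (simp add: nn_integral_shrink_kernel_q_fun[OF t])
  qed
qed

end

theorem theorem3:
  shows "\<exists>\<mu>. (markov_kernel \<mu> \<and>
           measure (\<mu> 0) {0} = 1 \<and>
           (\<forall>t>0. measure (\<mu> t) {0..<t} = 1) \<and>
           (\<forall>t>0. \<exists>P. chain_law \<mu> t P \<and>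
                 (\<forall>j. measure P (visits_eq t j) = q_fun j t))) \<and>
         (\<forall>\<nu>. (markov_kernel \<nu> \<and>
           measure (\<nu> 0) {0} = 1 \<and>
           (\<forall>t>0. measure (\<nu> t) {0..<t} = 1) \<and>
           (\<forall>t>0. \<exists>P. chain_law \<nu> t P \<and>
                 (\<forall>j. measure P (visits_eq t j) = q_fun j t)))
           \<longrightarrow> (\<forall>t\<ge>0. \<nu> t = \<mu> t))"
proof (intro exI[of _ shrink_kernel] conjI allI impI)
  show "markov_kernel shrink_kernel" by (rule markov_kernel_shrink_kernel)
  show "measure (shrink_kernel 0) {0} = 1" by (rule shrink_kernel_0)
  show "measure (shrink_kernel t) {0..<t} = 1" if "0 < t" for t
    using that by (rule shrink_kernel_lessThan)
  show "\<exists>P. chain_law shrink_kernel t P \<and> (\<forall>j. measure P (visits_eq t j) = q_fun j t)" if "0 < t" for t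
    using that
    by (auto intro!: exI[of _ "shrink_chain_law t"] chain_law_shrink_chain_law measure_shrink_chain_law_visits_eq)
  show "\<nu> t = shrink_kernel t"
    if "markov_kernel \<nu> \<and> measure (\<nu> 0) {0} = 1 \<and> (\<forall>t>0. measure (\<nu> t) {0..<t} = 1) \<and>
        (\<forall>t>0. \<exists>P. chain_law \<nu> t P \<and> (\<forall>j. measure P (visits_eq t j) = q_fun j t))"
      and "0 \<le> t" for \<nu> t
  proof -
    interpret decreasing_kernel \<nu> using that(1) by unfold_locales auto
    show ?thesis using that by (intro eq_shrink_kernel_if_visits) auto
  qed
qed

end
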